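(* Let $\Omega\subset\mathbb{C}^n$ ($n\geq2$) be a bounded domain equipped with a Finsler metric $F$ whose distance $d_F$ is complete, and assume $(\Omega,d_F)$ is Gromov hyperbolic. Suppose there are constants $C_1,C_2,\alpha>0$ and $0<\beta<1$ such that \[ d_F(x,y)\geq \alpha\left|\log\left(\frac{\delta(x)}{\delta(y)}\right)\right|-C_1\quad\text{for all }x,y\in\Omega, \] and \[ F(z,X)\geq\frac{C_2|X|}{\delta(z)^{\beta}}\quad\text{for all }z\in\Omega,\ 0\neq X\in\mathbb{C}^n. \] Let $\lambda\ge1$. Then there exists a constant $C=C(\lambda)>0$ such that for all $x,y\in\Omega$ and every Finsler $\lambda$-quasi-geodesic $\gamma$ in $\Omega$ connecting $x$ and $y$, \[ d_F(x,y)\geq2\alpha\log\left(\frac{L(\gamma)^{\frac{1}{\beta}}}{\sqrt{\delta(x)\delta(y)}}\right)-C, \] where $L(\gamma)$ is the Euclidean length of $\gamma$.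
   Context: $\delta(z)$ is the Euclidean distance from $z$ to $\partial\Omega$. A Finsler metric on $\Omega$ is an upper semicontinuous map $F:\Omega\times\mathbb{C}^n\to[0,\infty)$ with $F(z;tX)=|t|F(z;X)$ for $t\in\mathbb{C}$; its distance $d_F(x,y)$ is the infimum of $\int_0^1F(\gamma(t);\dot\gamma(t))\,dt$ over piecewise $C^1$ curves $\gamma:[0,1]\to\Omega$ from $x$ to $y$. $(\Omega,d_F)$ is Gromov hyperbolic if it is a proper geodesic metric space and there is $\delta_0\ge0$ with $(x|y)_\omega\ge\min\{(x|z)_\omega,(z|y)_\omega\}-\delta_0$ for all $x,y,z,\omega$, where $(x|y)_\omega=\frac12(d_F(x,\omega)+d_F(y,\omega)-d_F(x,y))$. A Finsler $\lambda$-quasi-geodesic is a curve $\gamma:I\to\Omega$ with $\lambda^{-1}|t-s|\le d_F(\gamma(t),\gamma(s))\le\lambda|t-s|$ for all $s,t\in I$. The constant $C$ may also depend on $\Omega,F$ and the given constants. *)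

theory Defs
  imports "HOL-Analysis.Analysis"
begin

definition bdist :: "(complex^'n) set \<Rightarrow> complex^'n \<Rightarrow> real" where
  "bdist \<Omega> z = infdist z (frontier \<Omega>)"

definition finsler_metric :: "(complex^'n) set \<Rightarrow> (complex^'n \<Rightarrow> complex^'n \<Rightarrow> real) \<Rightarrow> bool" where
  "finsler_metric \<Omega> F \<longleftrightarrow>
     (\<forall>z\<in>\<Omega>. \<forall>X. F z X \<ge> 0) \<and>
     (\<forall>z\<in>\<Omega>. \<forall>X. \<forall>t::complex. F z (t *s X) = norm t * F z X) \<and>
     (\<forall>c::real. openin (top_of_set (\<Omega> \<times> UNIV)) {p \<in> \<Omega> \<times> UNIV. F (fst p) (snd p) < c})"

definition curves :: "(complex^'n) set \<Rightarrow> complex^'n \<Rightarrow> complex^'n \<Rightarrow> (real \<Rightarrow> complex^'n) set" where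
  "curves \<Omega> x y = {\<gamma>. \<gamma> piecewise_C1_differentiable_on {0..1} \<and> \<gamma> ` {0..1} \<subseteq> \<Omega> \<and>
                      \<gamma> 0 = x \<and> \<gamma> 1 = y}"

definition finsler_length :: "(complex^'n \<Rightarrow> complex^'n \<Rightarrow> real) \<Rightarrow> (real \<Rightarrow> complex^'n) \<Rightarrow> ennreal" where
  "finsler_length F \<gamma> = (\<integral>\<^sup>+ t\<in>{0..1}. ennreal (F (\<gamma> t) (vector_derivative \<gamma> (at t))) \<partial>lborel)"

definition finsler_dist :: "(complex^'n) set \<Rightarrow> (complex^'n \<Rightarrow> complex^'n \<Rightarrow> real) \<Rightarrow> complex^'n \<Rightarrow> complex^'n \<Rightarrow> real" where
  "finsler_dist \<Omega> F x y = enn2real (INF \<gamma>\<in>curves \<Omega> x y. finsler_length F \<gamma>)"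

definition gromov_prod :: "('a \<Rightarrow> 'a \<Rightarrow> real) \<Rightarrow> 'a \<Rightarrow> 'a \<Rightarrow> 'a \<Rightarrow> real" where
  "gromov_prod d x y w = (d x w + d y w - d x y) / 2"

definition proper_space :: "'a set \<Rightarrow> ('a \<Rightarrow> 'a \<Rightarrow> real) \<Rightarrow> bool" where
  "proper_space M d \<longleftrightarrow>
     (\<forall>x\<in>M. \<forall>r. compactin (Metric_space.mtopology M d) (Metric_space.mcball M d x r))"

definition geodesic_space :: "'a set \<Rightarrow> ('a \<Rightarrow> 'a \<Rightarrow> real) \<Rightarrow> bool" where
  "geodesic_space M d \<longleftrightarrow>
     (\<forall>x\<in>M. \<forall>y\<in>M. \<exists>g::real \<Rightarrow> 'a. g ` {0..d x y} \<subseteq> M \<and> g 0 = x \<and> g (d x y) = y \<and>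
        (\<forall>s\<in>{0..d x y}. \<forall>t\<in>{0..d x y}. d (g s) (g t) = \<bar>s - t\<bar>))"

definition gromov_hyperbolic :: "'a set \<Rightarrow> ('a \<Rightarrow> 'a \<Rightarrow> real) \<Rightarrow> bool" where
  "gromov_hyperbolic M d \<longleftrightarrow>
     Metric_space M d \<and> proper_space M d \<and> geodesic_space M d \<and>
     (\<exists>\<delta>0\<ge>0. \<forall>x\<in>M. \<forall>y\<in>M. \<forall>z\<in>M. \<forall>w\<in>M.
        gromov_prod d x y w \<ge> min (gromov_prod d x z w) (gromov_prod d z y w) - \<delta>0)"

definition quasi_geodesic :: "'a set \<Rightarrow> ('a \<Rightarrow> 'a \<Rightarrow> real) \<Rightarrow> real \<Rightarrow> (real \<Rightarrow> 'a) \<Rightarrow> real set \<Rightarrow> bool" where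
  "quasi_geodesic M d lam \<gamma> I \<longleftrightarrow> \<gamma> ` I \<subseteq> M \<and>
     (\<forall>s\<in>I. \<forall>t\<in>I. \<bar>t - s\<bar> / lam \<le> d (\<gamma> t) (\<gamma> s) \<and> d (\<gamma> t) (\<gamma> s) \<le> lam * \<bar>t - s\<bar>)"

definition euclid_length :: "(real \<Rightarrow> 'a::real_normed_vector) \<Rightarrow> real \<Rightarrow> real \<Rightarrow> real" where
  "euclid_length \<gamma> a b = Sup {(\<Sum>i<n. norm (\<gamma> (t (Suc i)) - \<gamma> (t i))) | t n.
       t 0 = a \<and> t n = b \<and> (\<forall>i<n. t i \<le> t (Suc i))}"

end

theory Submission
  imports Defs
begin

(* Gromov hyperbolicity forces a lambda-quasi-geodesic gamma from x to y to stay uniformly close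
   to a geodesic, so every point gamma t has bounded Gromov product (x|y) at gamma t; this Morse-type
   bound is obtained by chaining the four-point condition along discretisations of both curves.
   With the first hypothesis, ln (delta (gamma t)) then lies below a tent function of the
   parameter whose peak is (ln (delta x) + ln (delta y)) / 2 + d_F(x, y) / (2 alpha) and whose
   slopes are 1 / (lam alpha), so delta (gamma t) ^ beta decays exponentially away from the peak.
   The second hypothesis bounds the Euclidean speed of gamma by a constant times
   delta (gamma t) ^ beta on short parameter intervals.  Summing the exponential decay bounds
   L(gamma) by a constant times exp (beta ((ln (delta x) + ln (delta y)) / 2 + d_F(x, y) / (2 alpha))),
   which is the claim after taking logarithms. *)

section \<open>Real inequalities\<close>

lemma le_of_le_add_mult_ln:
  fixes x A c B E :: real
  assumes "0 \<le> c" "0 \<le> B" "0 < E" "0 \<le> x" and x: "x \<le> A + c * ln (B * x + E)"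
  shows "x \<le> 2 * A + 2 * c * ln (2 * c * B + E)"
proof -
  define M where "M = 2 * c * B + E"
  define Y where "Y = B * x + E"
  have M: "0 < M" and Y: "0 < Y"
    using assms by (auto simp: M_def Y_def add_nonneg_pos)
  have "ln (Y / M) \<le> Y / M - 1"
    using M Y by (intro ln_le_minus_one) simp
  then have "c * ln Y \<le> c * (ln M + Y / M - 1)"
    using M Y \<open>0 \<le> c\<close> by (intro mult_left_mono) (simp_all add: ln_div)
  also have "\<dots> = c * ln M + c * (Y / M) - c"
    by (simp add: algebra_simps)
  \<comment> \<open>the choice of \<open>M\<close> makes the linear term at most \<open>x / 2\<close>\<close>
  also have "c * (Y / M) \<le> x / 2 + c"
  proof -
    have "c * Y \<le> M * (x / 2 + c)"
      using assms by (simp add: M_def Y_def algebra_simps)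
    then show ?thesis using M by (simp add: divide_le_eq mult.commute)
  qed
  finally show ?thesis using x by (simp add: M_def Y_def)
qed

lemma le_two_power_ceiling_log:
  fixes Y :: real
  assumes "1 \<le> Y"
  shows "Y \<le> 2 ^ nat \<lceil>log 2 Y\<rceil>"
proof -
  have "Y = 2 powr log 2 Y" using assms by simp
  also have "\<dots> \<le> 2 powr real (nat \<lceil>log 2 Y\<rceil>)"
    using assms by (intro powr_mono) auto
  finally show ?thesis by (simp add: powr_realpow)
qed

lemma exists_step_crossing:
  fixes s :: "nat \<Rightarrow> real"
  assumes "s 0 \<le> t" "t < s m"
  shows "\<exists>j<m. s j \<le> t \<and> t < s (Suc j)"
  using assms(2)
proof (induction m)
  case 0
  then show ?case using assms(1) by simp
next
  case (Suc m)
  show ?case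
  proof (cases "t < s m")
    case True
    then show ?thesis using Suc.IH by (meson less_SucI)
  qed (use Suc.prems in auto)
qed

lemma exists_close_of_steps_le_one:
  fixes u :: "nat \<Rightarrow> real"
  assumes steps: "\<And>k. k < N \<Longrightarrow> \<bar>u (Suc k) - u k\<bar> \<le> 1" and "u 0 \<le> v" "v \<le> u N"
  shows "\<exists>k\<le>N. \<bar>u k - v\<bar> \<le> 1"
proof (cases "v = u N")
  case False
  then obtain j where "j < N" "u j \<le> v" "v < u (Suc j)"
    using exists_step_crossing[of u v N] assms by auto
  then show ?thesis using steps[of j] by (intro exI[of _ j]) auto
qed auto

lemma exists_uniform_grid:
  fixes a b \<theta> :: real
  assumes "a < b" "0 < \<theta>"
  obtains N h where "1 \<le> N" "0 < h" "h \<le> \<theta>" "b = a + real N * h"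
proof -
  define N where "N = nat \<lceil>(b - a) / \<theta>\<rceil>"
  have "0 < (b - a) / \<theta>" using assms by simp
  then have N: "1 \<le> N" and "(b - a) / \<theta> \<le> real N" unfolding N_def by linarith+
  then have "(b - a) / real N \<le> \<theta>"
    using assms by (simp add: divide_le_eq mult.commute)
  moreover have "0 < (b - a) / real N" "b = a + real N * ((b - a) / real N)"
    using assms N by auto
  ultimately show ?thesis using that N by blast
qed

lemma sum_power_dist_le:
  fixes q :: real
  assumes q: "0 < q" "q < 1"
  shows "(\<Sum>k<N. q ^ (max k k0 - min k k0)) \<le> 2 / (1 - q)"
proof -
  have right: "(\<Sum>k\<in>{..<N} \<inter> {k0..}. q ^ (max k k0 - min k k0)) \<le> 1 / (1 - q)"
  proof -
    have "(\<Sum>k\<in>{..<N} \<inter> {k0..}. q ^ (max k k0 - min k k0)) = (\<Sum>j<N - k0. q ^ j)"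
      by (rule sum.reindex_bij_witness[of _ "\<lambda>j. j + k0" "\<lambda>k. k - k0"]) auto
    also have "\<dots> = (1 - q ^ (N - k0)) / (1 - q)" using q by (simp add: sum_gp_strict)
    also have "\<dots> \<le> 1 / (1 - q)" using q by (intro divide_right_mono) auto
    finally show ?thesis .
  qed
  have left: "(\<Sum>k\<in>{..<N} - {k0..}. q ^ (max k k0 - min k k0)) \<le> 1 / (1 - q)"
  proof -
    have "(\<Sum>k\<in>{..<N} - {k0..}. q ^ (max k k0 - min k k0)) = (\<Sum>k\<in>{..<N} - {k0..}. q ^ (k0 - k))"
      by (rule sum.cong) auto
    also have "\<dots> \<le> (\<Sum>k<k0. q ^ (k0 - k))"
      using q by (intro sum_mono2) auto
    also have "\<dots> = (\<Sum>k<k0. q ^ Suc k)"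
      by (rule sum.reindex_bij_witness[of _ "\<lambda>j. k0 - Suc j" "\<lambda>k. k0 - Suc k"])
        (auto simp: power_Suc [symmetric] Suc_diff_Suc)
    also have "\<dots> = q * (\<Sum>k<k0. q ^ k)" by (simp add: sum_distrib_left)
    also have "\<dots> = q * ((1 - q ^ k0) / (1 - q))" using q by (simp add: sum_gp_strict)
    also have "\<dots> \<le> 1 / (1 - q)"
      using q by (simp add: divide_le_eq mult_le_one power_le_one)
    finally show ?thesis .
  qed
  show ?thesis
    using sum.Int_Diff[of "{..<N}" "\<lambda>k. q ^ (max k k0 - min k k0)" "{k0..}"] left right by simp
qed

lemma riemann_sum_exp_decay_le:
  fixes c h :: real
  assumes c: "0 < c" and h: "0 < h" "h \<le> 1"
  shows "h * (\<Sum>k<N. exp (- (c * h) * \<bar>real k - real k0\<bar>)) \<le> 2 * (1 + c) / c"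
proof -
  define q where "q = exp (- (c * h))"
  have q: "0 < q" "q < 1" using c h by (auto simp: q_def)
  have "exp (- (c * h) * \<bar>real k - real k0\<bar>) = q ^ (max k k0 - min k k0)" for k
  proof -
    have "\<bar>real k - real k0\<bar> = real (max k k0 - min k k0)" by (simp add: of_nat_diff)
    then show ?thesis by (simp add: q_def exp_of_nat_mult [symmetric] mult.commute)
  qed
  then have "h * (\<Sum>k<N. exp (- (c * h) * \<bar>real k - real k0\<bar>)) = h * (\<Sum>k<N. q ^ (max k k0 - min k k0))"
    by simp
  also have "\<dots> \<le> h * (2 / (1 - q))"
    using h by (intro mult_left_mono sum_power_dist_le q) simp
  \<comment> \<open>\<open>1 - exp (- c h) \<ge> c h / (1 + c h)\<close>, from \<open>exp (c h) \<ge> 1 + c h\<close>\<close>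
  also have "\<dots> \<le> h * (2 * (1 + c * h) / (c * h))"
  proof -
    have ch: "0 < 1 + c * h" using c h by (simp add: add_pos_pos)
    have "1 + c * h \<le> exp (c * h)" by (rule exp_ge_add_one_self)
    then have "q \<le> inverse (1 + c * h)"
      unfolding q_def exp_minus using ch by (intro le_imp_inverse_le) auto
    moreover have "1 - inverse (1 + c * h) = c * h / (1 + c * h)"
      using ch by (simp add: field_simps)
    ultimately have "c * h / (1 + c * h) \<le> 1 - q" by linarith
    moreover have "0 < c * h / (1 + c * h)" using c h ch by simp
    ultimately have "2 / (1 - q) \<le> 2 / (c * h / (1 + c * h))"
      using q by (intro divide_left_mono mult_pos_pos) auto
    then show ?thesis using h by (intro mult_left_mono) auto
  qed
  also have "\<dots> \<le> 2 * (1 + c) / c"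
    using c h by (simp add: field_simps)
  finally show ?thesis .
qed

lemma half_div_powr_mono:
  fixes m p \<beta> :: real
  assumes "0 < m" "m \<le> p" "\<beta> \<le> 1"
  shows "(m / 2) / (3 * m / 2) powr \<beta> \<le> (p / 2) / (3 * p / 2) powr \<beta>"
proof -
  have eq: "(x / 2) / (3 * x / 2) powr \<beta> = x powr (1 - \<beta>) / (2 * (3 / 2) powr \<beta>)" if "0 < x" for x
  proof -
    have "(3 * x / 2) powr \<beta> = (3 / 2) powr \<beta> * x powr \<beta>"
      using that by (simp add: powr_mult [symmetric])
    moreover have "x powr (1 - \<beta>) = x / x powr \<beta>"
      using that by (simp add: powr_diff)
    ultimately show ?thesis by simp
  qed
  have "m powr (1 - \<beta>) \<le> p powr (1 - \<beta>)"
    using assms by (intro powr_mono2) auto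
  then show ?thesis
    using assms eq[of m] eq[of p] by (simp add: divide_right_mono)
qed

lemma ln_ratio_le_of_le_exp:
  fixes L K \<alpha> \<beta> p q D :: real
  assumes "0 < L" "0 < K" "0 < \<alpha>" "0 < \<beta>" "0 < p" "0 < q"
    and L: "L \<le> K * exp (\<beta> * ((ln p + ln q) / 2 + D / (2 * \<alpha>)))"
  shows "2 * \<alpha> * ln (L powr (1 / \<beta>) / sqrt (p * q)) \<le> D + 2 * \<alpha> * ln K / \<beta>"
proof -
  have "ln L \<le> ln (K * exp (\<beta> * ((ln p + ln q) / 2 + D / (2 * \<alpha>))))"
    using L assms by simp
  also have "\<dots> = ln K + \<beta> * ((ln p + ln q) / 2 + D / (2 * \<alpha>))"
    using assms by (simp add: ln_mult)
  finally have "ln L \<le> ln K + \<beta> * ((ln p + ln q) / 2 + D / (2 * \<alpha>))" .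
  then have "ln L / \<beta> \<le> (ln K + \<beta> * ((ln p + ln q) / 2 + D / (2 * \<alpha>))) / \<beta>"
    using assms by (intro divide_right_mono) auto
  also have "\<dots> = ln K / \<beta> + ((ln p + ln q) / 2 + D / (2 * \<alpha>))"
    using assms by (simp add: add_divide_distrib)
  finally have "ln L / \<beta> \<le> ln K / \<beta> + ((ln p + ln q) / 2 + D / (2 * \<alpha>))" .
  moreover have "ln (L powr (1 / \<beta>) / sqrt (p * q)) = ln L / \<beta> - (ln p + ln q) / 2"
    using assms by (simp add: ln_div ln_powr ln_sqrt ln_mult)
  ultimately have "ln (L powr (1 / \<beta>) / sqrt (p * q)) \<le> ln K / \<beta> + D / (2 * \<alpha>)"
    by linarith
  then have "2 * \<alpha> * ln (L powr (1 / \<beta>) / sqrt (p * q)) \<le> 2 * \<alpha> * (ln K / \<beta> + D / (2 * \<alpha>))"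
    using assms by (intro mult_left_mono) auto
  also have "\<dots> = D + 2 * \<alpha> * ln K / \<beta>"
    using assms by (simp add: field_simps)
  finally show ?thesis .
qed

section \<open>Curves and their Euclidean length\<close>

lemma exists_first_exit:
  fixes c :: "real \<Rightarrow> 'a::metric_space"
  assumes c: "continuous_on {a..b} c" and "a \<le> b" "0 \<le> r" "r \<le> dist (c b) (c a)"
  shows "\<exists>s\<in>{a..b}. dist (c s) (c a) = r \<and> (\<forall>t\<in>{a..s}. dist (c t) (c a) \<le> r)"
proof -
  define \<phi> where "\<phi> t = dist (c t) (c a)" for t
  have \<phi>: "continuous_on {a..b} \<phi>"
    unfolding \<phi>_def by (intro continuous_intros c)
  define T where "T = {t \<in> {a..b}. r \<le> \<phi> t}"
  have "closed T"
    unfolding T_def by (intro continuous_on_closed_Collect_le continuous_intros \<phi>)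
  moreover have "b \<in> T" "bdd_below T"
    using assms by (auto simp: T_def \<phi>_def)
  ultimately have sT: "Inf T \<in> T"
    by (intro closed_contains_Inf) auto
  define s where "s = Inf T"
  have below: "\<phi> t < r" if "t \<in> {a..<s}" for t
  proof (rule ccontr)
    assume "\<not> \<phi> t < r"
    then have "t \<in> T" using that sT by (auto simp: T_def s_def)
    then show False using that \<open>bdd_below T\<close> cInf_lower[of t T] by (auto simp: s_def)
  qed
  have s: "s \<in> {a..b}" "r \<le> \<phi> s" using sT by (auto simp: T_def s_def)
  \<comment> \<open>\<open>\<phi>\<close> is below \<open>r\<close> before \<open>s\<close>, so by continuity it attains \<open>r\<close> exactly at \<open>s\<close>\<close>
  have "continuous_on {a..s} \<phi>"
    by (rule continuous_on_subset[OF \<phi>]) (use s in auto)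
  then obtain s' where s': "a \<le> s'" "s' \<le> s" "\<phi> s' = r"
    using IVT'[of \<phi> a r s] s \<open>0 \<le> r\<close> by (auto simp: \<phi>_def)
  then have "s' = s" using below[of s'] by fastforce
  then show ?thesis
    using s s' below by (intro bexI[of _ s]) (auto simp: \<phi>_def le_less)
qed

lemma nn_integral_norm_ge_norm:
  fixes f :: "'a::euclidean_space \<Rightarrow> 'b::euclidean_space"
  assumes f: "(f has_integral v) S"
  shows "ennreal (norm v) \<le> (\<integral>\<^sup>+x\<in>S. ennreal (norm (f x)) \<partial>lborel)"
proof -
  define g where "g = (\<lambda>x. indicator S x * norm (f x))"
  have "(\<lambda>x. norm (indicator S x *\<^sub>R f x)) \<in> borel_measurable lebesgue"
    using has_integral_implies_lebesgue_measurable[OF f] by measurable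
  moreover have "(\<lambda>x. norm (indicator S x *\<^sub>R f x)) = g"
    by (auto simp: g_def indicator_def fun_eq_iff)
  ultimately have g: "g \<in> borel_measurable lebesgue" by simp
  have "(\<integral>\<^sup>+x\<in>S. ennreal (norm (f x)) \<partial>lborel) = (\<integral>\<^sup>+x. ennreal (g x) \<partial>lborel)"
    by (intro nn_integral_cong) (simp add: g_def indicator_def)
  then have eq: "(\<integral>\<^sup>+x\<in>S. ennreal (norm (f x)) \<partial>lborel) = (\<integral>\<^sup>+x. ennreal (g x) \<partial>lebesgue)"
    by (simp add: nn_integral_completion)
  show ?thesis
  proof (cases "(\<integral>\<^sup>+x. ennreal (g x) \<partial>lebesgue) = \<infinity>")
    case False
    then obtain r where r: "(\<integral>\<^sup>+x. ennreal (g x) \<partial>lebesgue) = ennreal r" "0 \<le> r"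
      using ennreal_cases by (metis infinity_ennreal_def)
    then have "(g has_integral r) UNIV"
      using g by (subst has_integral_iff_nn_integral_lebesgue) (auto simp: g_def)
    moreover have "g = (\<lambda>x. if x \<in> S then norm (f x) else 0)"
      by (auto simp: g_def fun_eq_iff)
    ultimately have nf: "((\<lambda>x. norm (f x)) has_integral r) S"
      by (simp add: has_integral_restrict_UNIV)
    have "norm v \<le> r"
      using integral_norm_bound_integral[of f S "\<lambda>x. norm (f x)"] f nf
      by (auto simp: has_integral_integrable integral_unique)
    then show ?thesis using eq r by simp
  qed (simp add: eq)
qed

lemma polygon_sum_le_of_dominated:
  fixes f :: "real \<Rightarrow> 'a::real_normed_vector"
  assumes dom: "\<And>s t. a \<le> s \<Longrightarrow> s \<le> t \<Longrightarrow> t \<le> b \<Longrightarrow> norm (f t - f s) \<le> \<Phi> t - \<Phi> s"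
    and t: "t 0 = a" "t n = b" "\<forall>i<n. t i \<le> t (Suc i)"
  shows "(\<Sum>i<n. norm (f (t (Suc i)) - f (t i))) \<le> \<Phi> b - \<Phi> a"
proof -
  have mono: "t i \<le> t j" if "i \<le> j" "j \<le> n" for i j
    using that
  proof (induction j rule: dec_induct)
    case (step m)
    then show ?case using t(3) by (meson Suc_le_lessD Suc_leD order_trans)
  qed simp
  then have "a \<le> t i" "t i \<le> b" if "i \<le> n" for i
    using that t mono[of 0 i] mono[of i n] by auto
  then have "(\<Sum>i<n. norm (f (t (Suc i)) - f (t i))) \<le> (\<Sum>i<n. \<Phi> (t (Suc i)) - \<Phi> (t i))"
    using t(3) by (intro sum_mono dom) auto
  also have "\<dots> = \<Phi> b - \<Phi> a"
    using t sum_lessThan_telescope[of "\<lambda>i. \<Phi> (t i)" n] by simp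
  finally show ?thesis .
qed

lemma euclid_length_le_of_dominated:
  fixes f :: "real \<Rightarrow> 'a::real_normed_vector"
  assumes "a \<le> b"
    and dom: "\<And>s t. a \<le> s \<Longrightarrow> s \<le> t \<Longrightarrow> t \<le> b \<Longrightarrow> norm (f t - f s) \<le> \<Phi> t - \<Phi> s"
  shows "norm (f b - f a) \<le> euclid_length f a b" "euclid_length f a b \<le> \<Phi> b - \<Phi> a"
proof -
  define P where "P = {(\<Sum>i<n. norm (f (t (Suc i)) - f (t i))) | t n.
       t 0 = a \<and> t n = b \<and> (\<forall>i<n. t i \<le> t (Suc i))}"
  have P: "v \<le> \<Phi> b - \<Phi> a" if "v \<in> P" for v
    using that polygon_sum_le_of_dominated[of a b f \<Phi>, OF dom] unfolding P_def by blast
  have "norm (f b - f a) \<in> P"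
    unfolding P_def using \<open>a \<le> b\<close>
    by (intro CollectI exI[of _ "\<lambda>i. if i = 0 then a else b"] exI[of _ 1]) auto
  moreover have "euclid_length f a b = Sup P"
    unfolding euclid_length_def P_def ..
  moreover have "bdd_above P" using P by (rule bdd_aboveI)
  ultimately show "norm (f b - f a) \<le> euclid_length f a b" "euclid_length f a b \<le> \<Phi> b - \<Phi> a"
    using P by (auto intro: cSup_upper cSup_least)
qed

text \<open>The primitive, starting at \<open>a\<close>, of the step function equal to \<open>w k\<close> on the cell
  \<open>[a + k h, a + (k + 1) h]\<close>, for \<open>k < N\<close>.\<close>

definition grid_primitive :: "real \<Rightarrow> real \<Rightarrow> (nat \<Rightarrow> real) \<Rightarrow> nat \<Rightarrow> real \<Rightarrow> real" where
  "grid_primitive a h w N t = (\<Sum>k<N. w k * min (max (t - (a + real k * h)) 0) h)"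

lemma grid_primitive_cell:
  assumes "\<And>k. k < N \<Longrightarrow> 0 \<le> w k" and "k < N"
    and "a + real k * h \<le> s" "s \<le> t" "t \<le> a + real (Suc k) * h"
  shows "w k * (t - s) \<le> grid_primitive a h w N t - grid_primitive a h w N s"
proof -
  define cl where "cl j t = min (max (t - (a + real j * h)) 0) h" for j t
  have "cl k t - cl k s = t - s"
    using assms by (auto simp: cl_def algebra_simps)
  then have "w k * (t - s) = w k * (cl k t - cl k s)" by simp
  also have "\<dots> \<le> (\<Sum>j<N. w j * (cl j t - cl j s))"
    using assms by (intro member_le_sum mult_nonneg_nonneg) (auto simp: cl_def)
  also have "\<dots> = grid_primitive a h w N t - grid_primitive a h w N s"
    by (simp add: grid_primitive_def cl_def sum_subtractf right_diff_distrib)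
  finally show ?thesis .
qed

lemma norm_le_grid_primitive:
  fixes f :: "real \<Rightarrow> 'a::real_normed_vector"
  assumes w: "\<And>k. k < N \<Longrightarrow> 0 \<le> w k"
    and cell: "\<And>k s t. k < N \<Longrightarrow> a + real k * h \<le> s \<Longrightarrow> s \<le> t \<Longrightarrow> t \<le> a + real (Suc k) * h \<Longrightarrow>
                norm (f t - f s) \<le> w k * (t - s)"
    and "a \<le> s" "s \<le> t" "t \<le> a + real N * h"
  shows "norm (f t - f s) \<le> grid_primitive a h w N t - grid_primitive a h w N s"
proof -
  let ?\<Phi> = "grid_primitive a h w N"
  have "\<forall>s t. a \<le> s \<longrightarrow> s \<le> t \<longrightarrow> t \<le> a + real j * h \<longrightarrow> norm (f t - f s) \<le> ?\<Phi> t - ?\<Phi> s"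
    if "j \<le> N" for j
    using that
  proof (induction j)
    case 0
    show ?case
    proof (intro allI impI)
      fix s t assume "a \<le> s" "s \<le> t" "t \<le> a + real 0 * h"
      then have "s = t" by simp
      then show "norm (f t - f s) \<le> ?\<Phi> t - ?\<Phi> s" by simp
    qed
  next
    case (Suc j)
    show ?case
    proof (intro allI impI)
      fix s t assume st: "a \<le> s" "s \<le> t" "t \<le> a + real (Suc j) * h"
      let ?\<tau> = "a + real j * h"
      have j: "j < N" using Suc.prems by simp
      have cell': "norm (f t' - f s') \<le> ?\<Phi> t' - ?\<Phi> s'"
        if "?\<tau> \<le> s'" "s' \<le> t'" "t' \<le> a + real (Suc j) * h" for s' t'
        using cell[OF j that] grid_primitive_cell[of N w, OF w j that] by linarith
      consider "t \<le> ?\<tau>" | "?\<tau> \<le> s" | "s < ?\<tau>" "?\<tau> < t" by linarith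
      then show "norm (f t - f s) \<le> ?\<Phi> t - ?\<Phi> s"
      proof cases
        case 3
        have "norm (f t - f s) \<le> norm (f t - f ?\<tau>) + norm (f ?\<tau> - f s)"
          using norm_triangle_ineq[of "f t - f ?\<tau>" "f ?\<tau> - f s"] by simp
        also have "\<dots> \<le> (?\<Phi> t - ?\<Phi> ?\<tau>) + (?\<Phi> ?\<tau> - ?\<Phi> s)"
        proof (rule add_mono)
          show "norm (f t - f ?\<tau>) \<le> ?\<Phi> t - ?\<Phi> ?\<tau>" using 3 st by (intro cell') auto
          show "norm (f ?\<tau> - f s) \<le> ?\<Phi> ?\<tau> - ?\<Phi> s" using 3 st Suc.IH Suc.prems by auto
        qed
        finally show ?thesis by simp
      qed (use Suc st cell' in auto)
    qed
  qed
  then show ?thesis using assms by blast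
qed

lemma euclid_length_le_grid:
  fixes f :: "real \<Rightarrow> 'a::real_normed_vector"
  assumes h: "0 < h" and b: "b = a + real N * h"
    and w: "\<And>k. k < N \<Longrightarrow> 0 \<le> w k"
    and cell: "\<And>k s t. k < N \<Longrightarrow> a + real k * h \<le> s \<Longrightarrow> s \<le> t \<Longrightarrow> t \<le> a + real (Suc k) * h \<Longrightarrow>
                norm (f t - f s) \<le> w k * (t - s)"
  shows "norm (f b - f a) \<le> euclid_length f a b" "euclid_length f a b \<le> h * (\<Sum>k<N. w k)"
proof -
  have "a \<le> b" using h b by simp
  have "norm (f t - f s) \<le> grid_primitive a h w N t - grid_primitive a h w N s"
    if "a \<le> s" "s \<le> t" "t \<le> b" for s t
    using norm_le_grid_primitive[of N w a h f s t, OF w cell] that b by blast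
  note dom = euclid_length_le_of_dominated[of a b f "grid_primitive a h w N", OF \<open>a \<le> b\<close> this]
  show "norm (f b - f a) \<le> euclid_length f a b" using dom b by simp
  have "min (max (b - (a + real k * h)) 0) h = h" if "k < N" for k
  proof -
    have "real (Suc k) * h \<le> real N * h" using that h by (intro mult_right_mono) auto
    then show ?thesis using b by (simp add: algebra_simps)
  qed
  moreover have "min (max (a - (a + real k * h)) 0) h = 0" for k
    using h by simp
  ultimately have "grid_primitive a h w N b - grid_primitive a h w N a = (\<Sum>k<N. w k * h)"
    unfolding grid_primitive_def by (simp add: sum_subtractf[symmetric])
  then show "euclid_length f a b \<le> h * (\<Sum>k<N. w k)"
    using dom b by (simp add: sum_distrib_left mult.commute)
qed

section \<open>Gromov products and quasi-geodesics\<close>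

definition gromov_four_point :: "'a set \<Rightarrow> ('a \<Rightarrow> 'a \<Rightarrow> real) \<Rightarrow> real \<Rightarrow> bool" where
  "gromov_four_point M d \<delta> \<longleftrightarrow> (\<forall>x\<in>M. \<forall>y\<in>M. \<forall>z\<in>M. \<forall>w\<in>M.
     min (gromov_prod d x z w) (gromov_prod d z y w) - \<delta> \<le> gromov_prod d x y w)"

definition geodesic_segment :: "'a set \<Rightarrow> ('a \<Rightarrow> 'a \<Rightarrow> real) \<Rightarrow> (real \<Rightarrow> 'a) \<Rightarrow> real \<Rightarrow> bool" where
  "geodesic_segment M d g D \<longleftrightarrow> g ` {0..D} \<subseteq> M \<and> (\<forall>s\<in>{0..D}. \<forall>t\<in>{0..D}. d (g s) (g t) = \<bar>s - t\<bar>)"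

lemma quasi_geodesic_in: "quasi_geodesic M d lam \<gamma> I \<Longrightarrow> t \<in> I \<Longrightarrow> \<gamma> t \<in> M"
  by (auto simp: quasi_geodesic_def)

lemma quasi_geodesic_le:
  "quasi_geodesic M d lam \<gamma> I \<Longrightarrow> s \<in> I \<Longrightarrow> t \<in> I \<Longrightarrow> d (\<gamma> t) (\<gamma> s) \<le> lam * \<bar>t - s\<bar>"
  by (auto simp: quasi_geodesic_def)

lemma quasi_geodesic_ge:
  assumes "quasi_geodesic M d lam \<gamma> I" "0 < lam" "s \<in> I" "t \<in> I"
  shows "\<bar>t - s\<bar> \<le> lam * d (\<gamma> t) (\<gamma> s)"
  using assms by (auto simp: quasi_geodesic_def divide_le_eq mult.commute)

lemma quasi_geodesic_unit_steps:
  assumes qg: "quasi_geodesic M d lam \<gamma> {a..b}" "1 \<le> lam"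
    and s: "s \<in> {a..b}" "s' \<in> {a..b}" "\<bar>s' - s\<bar> \<le> T"
  obtains N \<sigma> where "1 \<le> N" "real N \<le> lam^2 * T + 2" "\<sigma> 0 = s" "\<sigma> N = s'"
    "\<And>i. i \<le> N \<Longrightarrow> \<sigma> i \<in> {a..b}" "\<And>i. i < N \<Longrightarrow> d (\<gamma> (\<sigma> (Suc i))) (\<gamma> (\<sigma> i)) \<le> 1"
proof -
  define N where "N = nat \<lceil>lam^2 * T\<rceil> + 1"
  have "0 \<le> T" using s by linarith
  then have "real (nat \<lceil>lam^2 * T\<rceil>) = of_int \<lceil>lam^2 * T\<rceil>" by simp
  then have N: "1 \<le> N" "lam^2 * T \<le> real N" "real N \<le> lam^2 * T + 2"
    unfolding N_def using le_of_int_ceiling[of "lam^2 * T"] of_int_ceiling_le_add_one[of "lam^2 * T"]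
    by linarith+
  define \<sigma> where "\<sigma> i = s + real i * ((s' - s) / real N)" for i
  have \<sigma>: "\<sigma> i \<in> {a..b}" if "i \<le> N" for i
  proof -
    define \<theta> where "\<theta> = real i / real N"
    have "0 \<le> \<theta>" "\<theta> \<le> 1" using that N by (auto simp: \<theta>_def)
    then have "(1 - \<theta>) *\<^sub>R s + \<theta> *\<^sub>R s' \<in> {a..b}"
      using s by (intro convexD) auto
    moreover have "(1 - \<theta>) *\<^sub>R s + \<theta> *\<^sub>R s' = s + \<theta> * (s' - s)"
      by (simp add: algebra_simps)
    moreover have "\<sigma> i = s + \<theta> * (s' - s)"
      by (simp add: \<sigma>_def \<theta>_def)
    ultimately show ?thesis by simp
  qed
  have "d (\<gamma> (\<sigma> (Suc i))) (\<gamma> (\<sigma> i)) \<le> 1" if "i < N" for i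
  proof -
    have "lam * \<bar>s' - s\<bar> \<le> lam * T"
      using s(3) qg(2) by (intro mult_left_mono) auto
    also have "\<dots> \<le> lam^2 * T"
      using qg \<open>0 \<le> T\<close> by (intro mult_right_mono) (auto simp: power2_eq_square)
    finally have "lam * \<bar>s' - s\<bar> / real N \<le> 1"
      using N by (simp add: divide_le_eq)
    moreover have "\<sigma> (Suc i) - \<sigma> i = (s' - s) / real N"
      by (simp add: \<sigma>_def distrib_right diff_divide_distrib [symmetric])
    then have "lam * \<bar>\<sigma> (Suc i) - \<sigma> i\<bar> = lam * \<bar>s' - s\<bar> / real N"
      by (simp add: abs_divide)
    ultimately show ?thesis
      using quasi_geodesic_le[OF qg(1) \<sigma>[of i] \<sigma>[of "Suc i"]] that by linarith
  qed
  moreover have "\<sigma> 0 = s" "\<sigma> N = s'" using N by (auto simp: \<sigma>_def)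
  ultimately show ?thesis using that N \<sigma> by blast
qed

text \<open>The explicit solution of the implicit bound on the distance from a geodesic to a quasi-geodesic
  that comes out of \<open>far_point_le\<close> below.\<close>

definition morse_radius :: "real \<Rightarrow> real \<Rightarrow> real" where
  "morse_radius lam \<delta> = 4 + 6 * \<delta> + 2 * \<delta> * log 2 (12 * lam^3 * \<delta> / ln 2 + 6 * lam^3 + 2)"

lemma morse_radius_nonneg:
  assumes "0 \<le> \<delta>" "0 \<le> lam"
  shows "0 \<le> morse_radius lam \<delta>"
proof -
  have "1 \<le> 12 * lam^3 * \<delta> / ln 2 + 6 * lam^3 + 2" using assms by simp
  then have "0 \<le> log 2 (12 * lam^3 * \<delta> / ln 2 + 6 * lam^3 + 2)" by simp
  then show ?thesis using assms by (simp add: morse_radius_def)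
qed

lemma morse_radius_ge:
  assumes "0 \<le> \<delta>" "0 \<le> lam" "0 \<le> x"
    and x: "x - 1 \<le> 1/2 + \<delta> * (log 2 (6 * lam^3 * (x + 1) + 2) + 3)"
  shows "x + 1 \<le> morse_radius lam \<delta>"
proof -
  define c where "c = \<delta> / ln 2"
  have c: "0 \<le> c" using assms by (simp add: c_def)
  have "\<delta> * log 2 y = c * ln y" for y by (simp add: c_def log_def)
  then have "x \<le> (3/2 + 3 * \<delta>) + c * ln (6 * lam^3 * x + (6 * lam^3 + 2))"
    using x by (simp add: algebra_simps)
  moreover have "0 < 6 * lam^3 + 2"
    using assms by (intro add_nonneg_pos) auto
  ultimately have "x \<le> 2 * (3/2 + 3 * \<delta>) + 2 * c * ln (2 * c * (6 * lam^3) + (6 * lam^3 + 2))"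
    using assms c by (intro le_of_le_add_mult_ln) auto
  also have "2 * c * ln (2 * c * (6 * lam^3) + (6 * lam^3 + 2)) =
      2 * \<delta> * log 2 (12 * lam^3 * \<delta> / ln 2 + 6 * lam^3 + 2)"
    by (simp add: c_def log_def algebra_simps)
  finally show ?thesis by (simp add: morse_radius_def)
qed

context Metric_space
begin

lemma gromov_prod_commute: "gromov_prod d x y w = gromov_prod d y x w"
  by (simp add: gromov_prod_def commute)

lemma gromov_prod_self: "x \<in> M \<Longrightarrow> gromov_prod d x x w = d x w"
  by (simp add: gromov_prod_def)

lemma gromov_prod_ge_dist_diff:
  "x \<in> M \<Longrightarrow> y \<in> M \<Longrightarrow> w \<in> M \<Longrightarrow> d x w - d x y \<le> gromov_prod d x y w"
  using triangle[of x y w] by (simp add: gromov_prod_def)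

lemma gromov_prod_le_add_dist:
  assumes "x \<in> M" "y \<in> M" "z \<in> M" "w \<in> M"
  shows "gromov_prod d x y z \<le> gromov_prod d x y w + d w z"
  using triangle[OF assms(1,4,3)] triangle[OF assms(2,4,3)] by (simp add: gromov_prod_def field_simps)

lemma gromov_prod_geodesic_eq_0:
  assumes "geodesic_segment M d g D" "0 \<le> r" "r \<le> s" "s \<le> t" "t \<le> D"
  shows "gromov_prod d (g r) (g t) (g s) = 0"
  using assms by (simp add: geodesic_segment_def gromov_prod_def)

lemma gromov_prod_chain:
  assumes fp: "gromov_four_point M d \<delta>" and "0 \<le> \<delta>" "w \<in> M"
    and "\<forall>i\<le>m. p i \<in> M" "1 \<le> m" "m \<le> 2 ^ k" "\<forall>i<m. \<mu> \<le> gromov_prod d (p i) (p (Suc i)) w"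
  shows "\<mu> - real k * \<delta> \<le> gromov_prod d (p 0) (p m) w"
  using assms(4-7)
proof (induction k arbitrary: p m)
  case 0
  then show ?case by simp
next
  case (Suc k)
  show ?case
  proof (cases "m = 1")
    case True
    then have "\<mu> \<le> gromov_prod d (p 0) (p m) w" using Suc.prems(4) by auto
    moreover have "0 \<le> real (Suc k) * \<delta>" using \<open>0 \<le> \<delta>\<close> by simp
    ultimately show ?thesis by linarith
  next
    case False
    \<comment> \<open>halve the chain and apply the four-point condition at the midpoint\<close>
    define h where "h = m div 2"
    have h: "1 \<le> h" "h \<le> 2 ^ k" "1 \<le> m - h" "m - h \<le> 2 ^ k" "h \<le> m"
      using False Suc.prems unfolding h_def by auto
    have "\<mu> - real k * \<delta> \<le> gromov_prod d (p 0) (p h) w"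
      using Suc.IH[of h p] Suc.prems h by auto
    moreover have "\<mu> - real k * \<delta> \<le> gromov_prod d (p (h + 0)) (p (h + (m - h))) w"
      using Suc.prems h by (intro Suc.IH[of "m - h" "\<lambda>i. p (h + i)"]) auto
    then have "\<mu> - real k * \<delta> \<le> gromov_prod d (p h) (p m) w"
      using h by simp
    moreover have "min (gromov_prod d (p 0) (p h) w) (gromov_prod d (p h) (p m) w) - \<delta>
        \<le> gromov_prod d (p 0) (p m) w"
      using fp \<open>w \<in> M\<close> Suc.prems h unfolding gromov_four_point_def by auto
    moreover have "real (Suc k) * \<delta> = real k * \<delta> + \<delta>"
      by (simp add: algebra_simps)
    ultimately show ?thesis by linarith
  qed
qed

lemma dist_le_of_gromov_prod_le:
  assumes fp: "gromov_four_point M d \<delta>"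
    and M: "x \<in> M" "y \<in> M" "z \<in> M" "z' \<in> M"
    and H: "gromov_prod d x y z \<le> H" "gromov_prod d x y z' \<le> H"
  shows "d z z' \<le> \<bar>d x z - d x z'\<bar> + 2 * H + 2 * \<delta>"
proof -
  have c: "d z x = d x z" "d y x = d x y" "d z y = d y z" "d z' x = d x z'" "d z' y = d y z'"
    by (simp_all add: commute)
  have "d x z - H \<le> gromov_prod d z y x"
    using H c by (simp add: gromov_prod_def field_simps)
  moreover have "d x z' - H \<le> gromov_prod d y z' x"
    using H c by (simp add: gromov_prod_def field_simps)
  moreover have "min (gromov_prod d z y x) (gromov_prod d y z' x) - \<delta> \<le> gromov_prod d z z' x"
    using fp M unfolding gromov_four_point_def by blast
  moreover have "d z z' = d x z + d x z' - 2 * gromov_prod d z z' x"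
    using c by (simp add: gromov_prod_def field_simps)
  ultimately show ?thesis by (cases "d x z \<le> d x z'") (simp_all add: min_def split: if_splits)
qed

lemma gromov_prod_three_links:
  assumes fp: "gromov_four_point M d \<delta>" and "0 \<le> \<delta>"
    and M: "x \<in> M" "y \<in> M" "z \<in> M" "z' \<in> M" "w \<in> M"
  shows "min (gromov_prod d x z w) (min (gromov_prod d z z' w) (gromov_prod d z' y w)) - 2 * \<delta>
    \<le> gromov_prod d x y w"
proof -
  have "min (gromov_prod d x z' w) (gromov_prod d z' y w) - \<delta> \<le> gromov_prod d x y w"
    "min (gromov_prod d x z w) (gromov_prod d z z' w) - \<delta> \<le> gromov_prod d x z' w"
    using fp M unfolding gromov_four_point_def by blast+
  then show ?thesis using \<open>0 \<le> \<delta>\<close> by (simp add: min_def split: if_splits)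
qed

lemma gromov_prod_chain_log:
  assumes fp: "gromov_four_point M d \<delta>" and "0 \<le> \<delta>" "w \<in> M"
    and p: "\<forall>i\<le>m. p i \<in> M" and m: "1 \<le> m" "real m \<le> Y"
    and links: "\<forall>i<m. \<mu> \<le> gromov_prod d (p i) (p (Suc i)) w"
  shows "\<mu> - \<delta> * (log 2 Y + 1) \<le> gromov_prod d (p 0) (p m) w"
proof -
  define k where "k = nat \<lceil>log 2 Y\<rceil>"
  have "1 \<le> Y" using m by linarith
  then have "Y \<le> 2 ^ k" unfolding k_def by (rule le_two_power_ceiling_log)
  then have "real m \<le> 2 ^ k" using m by linarith
  then have "m \<le> 2 ^ k" by (metis of_nat_le_iff of_nat_numeral of_nat_power)
  then have "\<mu> - real k * \<delta> \<le> gromov_prod d (p 0) (p m) w"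
    using p m links by (intro gromov_prod_chain[OF fp \<open>0 \<le> \<delta>\<close> \<open>w \<in> M\<close>])
  moreover have "real k \<le> log 2 Y + 1"
    unfolding k_def using \<open>1 \<le> Y\<close> of_int_ceiling_le_add_one[of "log 2 Y"] by simp
  then have "real k * \<delta> \<le> \<delta> * (log 2 Y + 1)"
    using \<open>0 \<le> \<delta>\<close> by (metis mult.commute mult_left_mono)
  ultimately show ?thesis by linarith
qed

lemma gromov_prod_quasi_geodesic_ge:
  assumes fp: "gromov_four_point M d \<delta>" "0 \<le> \<delta>"
    and qg: "quasi_geodesic M d lam \<gamma> {a..b}" "1 \<le> lam"
    and s: "s \<in> {a..b}" "s' \<in> {a..b}" "\<bar>s' - s\<bar> \<le> T" and w: "w \<in> M"
    and far: "\<forall>t\<in>{a..b}. R \<le> d (\<gamma> t) w"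
  shows "R - 1/2 - \<delta> * (log 2 (lam^2 * T + 2) + 1) \<le> gromov_prod d (\<gamma> s) (\<gamma> s') w"
proof -
  obtain N \<sigma> where N: "1 \<le> N" "real N \<le> lam^2 * T + 2" "\<sigma> 0 = s" "\<sigma> N = s'"
    and \<sigma>: "\<And>i. i \<le> N \<Longrightarrow> \<sigma> i \<in> {a..b}"
    and step: "\<And>i. i < N \<Longrightarrow> d (\<gamma> (\<sigma> (Suc i))) (\<gamma> (\<sigma> i)) \<le> 1"
    using quasi_geodesic_unit_steps[OF qg s] by blast
  have "\<forall>i<N. R - 1/2 \<le> gromov_prod d (\<gamma> (\<sigma> i)) (\<gamma> (\<sigma> (Suc i))) w"
  proof (intro allI impI)
    fix i assume "i < N"
    then have "R \<le> d (\<gamma> (\<sigma> i)) w" "R \<le> d (\<gamma> (\<sigma> (Suc i))) w"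
      "d (\<gamma> (\<sigma> i)) (\<gamma> (\<sigma> (Suc i))) \<le> 1"
      using far \<sigma>[of i] \<sigma>[of "Suc i"] step[of i] commute[of "\<gamma> (\<sigma> (Suc i))" "\<gamma> (\<sigma> i)"] by auto
    then show "R - 1/2 \<le> gromov_prod d (\<gamma> (\<sigma> i)) (\<gamma> (\<sigma> (Suc i))) w"
      by (simp add: gromov_prod_def)
  qed
  then show ?thesis
    using gromov_prod_chain_log[OF fp w, of N "\<lambda>i. \<gamma> (\<sigma> i)"] \<sigma> N quasi_geodesic_in[OF qg(1)] by simp
qed

context
  fixes \<delta> lam \<gamma> a b g
  assumes fp: "gromov_four_point M d \<delta>" and \<delta>: "0 \<le> \<delta>"
    and qg: "quasi_geodesic M d lam \<gamma> {a..b}" and lam: "1 \<le> lam" and ab: "a \<le> b"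
    and geo: "geodesic_segment M d g (d (\<gamma> a) (\<gamma> b))"
    and g0: "g 0 = \<gamma> a" and gD: "g (d (\<gamma> a) (\<gamma> b)) = \<gamma> b"
begin

lemma geodesic_in: "r \<in> {0..d (\<gamma> a) (\<gamma> b)} \<Longrightarrow> g r \<in> M"
  using geo by (auto simp: geodesic_segment_def)

lemma geodesic_dist: "r \<in> {0..d (\<gamma> a) (\<gamma> b)} \<Longrightarrow> s \<in> {0..d (\<gamma> a) (\<gamma> b)} \<Longrightarrow> d (g r) (g s) = \<bar>r - s\<bar>"
  using geo by (auto simp: geodesic_segment_def)

lemma exists_quasi_geodesic_link:
  assumes r: "r \<in> {0..d (\<gamma> a) (\<gamma> b)}" "r0 \<in> {0..d (\<gamma> a) (\<gamma> b)}"
    and r_cases: "r = 0 \<or> r = d (\<gamma> a) (\<gamma> b) \<or> 2 * Q \<le> \<bar>r - r0\<bar>"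
    and "0 \<le> Q" "R \<le> Q"
    and near: "\<forall>r\<in>{0..d (\<gamma> a) (\<gamma> b)}. \<exists>t\<in>{a..b}. d (g r) (\<gamma> t) \<le> Q"
    and far: "\<forall>t\<in>{a..b}. R \<le> d (\<gamma> t) (g r0)"
  obtains s where "s \<in> {a..b}" "d (g r) (\<gamma> s) \<le> Q" "R \<le> gromov_prod d (g r) (\<gamma> s) (g r0)"
proof -
  have x0: "g r0 \<in> M" using r geodesic_in by blast
  consider "g r = \<gamma> a" | "g r = \<gamma> b" | "2 * Q \<le> \<bar>r - r0\<bar>"
    using r_cases g0 gD by blast
  then show ?thesis
  proof cases
    case 1
    then show ?thesis
      using that[of a] ab \<open>0 \<le> Q\<close> far quasi_geodesic_in[OF qg] by (auto simp: gromov_prod_self)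
  next
    case 2
    then show ?thesis
      using that[of b] ab \<open>0 \<le> Q\<close> far quasi_geodesic_in[OF qg] by (auto simp: gromov_prod_self)
  next
    case 3
    obtain s where s: "s \<in> {a..b}" "d (g r) (\<gamma> s) \<le> Q" using near r by blast
    have "2 * Q \<le> d (g r) (g r0)" using 3 r geodesic_dist by simp
    then have "R \<le> gromov_prod d (g r) (\<gamma> s) (g r0)"
      using gromov_prod_ge_dist_diff[of "g r" "\<gamma> s" "g r0"] s x0 r geodesic_in \<open>R \<le> Q\<close>
        quasi_geodesic_in[OF qg] by fastforce
    then show ?thesis using that s by blast
  qed
qed

lemma far_point_le:
  assumes r0: "r0 \<in> {0..d (\<gamma> a) (\<gamma> b)}" and "0 \<le> Q" "R \<le> Q"
    and near: "\<forall>r\<in>{0..d (\<gamma> a) (\<gamma> b)}. \<exists>t\<in>{a..b}. d (g r) (\<gamma> t) \<le> Q"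
    and far: "\<forall>t\<in>{a..b}. R \<le> d (\<gamma> t) (g r0)"
  shows "R \<le> 1/2 + \<delta> * (log 2 (6 * lam^3 * Q + 2) + 3)"
proof -
  define D where "D = d (\<gamma> a) (\<gamma> b)"
  define ry where "ry = max 0 (r0 - 2 * Q)"
  define rz where "rz = min D (r0 + 2 * Q)"
  have r: "ry \<in> {0..D}" "rz \<in> {0..D}" "ry \<le> r0" "r0 \<le> rz" "rz - ry \<le> 4 * Q"
    using r0 \<open>0 \<le> Q\<close> by (auto simp: ry_def rz_def D_def)
  have x0: "g r0 \<in> M" using r0 geodesic_in by blast
  have "ry = 0 \<or> ry = D \<or> 2 * Q \<le> \<bar>ry - r0\<bar>" "rz = 0 \<or> rz = D \<or> 2 * Q \<le> \<bar>rz - r0\<bar>"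
    by (auto simp: ry_def rz_def)
  note link = exists_quasi_geodesic_link[OF _ r0 _ \<open>0 \<le> Q\<close> \<open>R \<le> Q\<close> near far]
  obtain sy where sy: "sy \<in> {a..b}" "d (g ry) (\<gamma> sy) \<le> Q" "R \<le> gromov_prod d (g ry) (\<gamma> sy) (g r0)"
    by (rule link[of ry]) (use r \<open>ry = 0 \<or> _\<close> in \<open>simp_all add: D_def\<close>)
  obtain sz where sz: "sz \<in> {a..b}" "d (g rz) (\<gamma> sz) \<le> Q" "R \<le> gromov_prod d (g rz) (\<gamma> sz) (g r0)"
    by (rule link[of rz]) (use r \<open>rz = 0 \<or> _\<close> in \<open>simp_all add: D_def\<close>)
  have M: "g ry \<in> M" "g rz \<in> M" "\<gamma> sy \<in> M" "\<gamma> sz \<in> M"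
    using r geodesic_in quasi_geodesic_in[OF qg sy(1)] quasi_geodesic_in[OF qg sz(1)]
    by (simp_all add: D_def)
  have "d (\<gamma> sz) (\<gamma> sy) \<le> d (\<gamma> sz) (g rz) + d (g rz) (\<gamma> sy)"
    using M by (intro triangle) auto
  also have "d (g rz) (\<gamma> sy) \<le> d (g rz) (g ry) + d (g ry) (\<gamma> sy)"
    using M by (intro triangle) auto
  finally have "d (\<gamma> sz) (\<gamma> sy) \<le> 6 * Q"
    using sy sz r geodesic_dist[of rz ry] commute[of "\<gamma> sz" "g rz"] by (simp add: D_def)
  then have "lam * d (\<gamma> sz) (\<gamma> sy) \<le> lam * (6 * Q)"
    using lam by (intro mult_left_mono) auto
  then have "\<bar>sz - sy\<bar> \<le> lam * (6 * Q)"
    using quasi_geodesic_ge[OF qg _ sy(1) sz(1)] lam by linarith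
  \<comment> \<open>the middle link runs along the quasi-geodesic, the outer ones are short jumps to the geodesic\<close>
  then have "R - 1/2 - \<delta> * (log 2 (lam^2 * (lam * (6 * Q)) + 2) + 1) \<le> gromov_prod d (\<gamma> sy) (\<gamma> sz) (g r0)"
    by (rule gromov_prod_quasi_geodesic_ge[OF fp \<delta> qg lam sy(1) sz(1) _ x0 far])
  moreover have "lam^2 * (lam * (6 * Q)) = 6 * lam^3 * Q"
    by (simp add: power2_eq_square power3_eq_cube)
  ultimately have mid: "R - 1/2 - \<delta> * (log 2 (6 * lam^3 * Q + 2) + 1) \<le> gromov_prod d (\<gamma> sy) (\<gamma> sz) (g r0)"
    by simp
  have "1 \<le> 6 * lam^3 * Q + 2" using lam \<open>0 \<le> Q\<close> by simp
  then have "0 \<le> \<delta> * (log 2 (6 * lam^3 * Q + 2) + 1)" using \<delta> by simp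
  then have "R - 1/2 - \<delta> * (log 2 (6 * lam^3 * Q + 2) + 1)
      \<le> min (gromov_prod d (g ry) (\<gamma> sy) (g r0)) (min (gromov_prod d (\<gamma> sy) (\<gamma> sz) (g r0))
           (gromov_prod d (\<gamma> sz) (g rz) (g r0)))"
    using sy(3) sz(3) mid gromov_prod_commute[of "g rz"] by simp
  moreover have "min (gromov_prod d (g ry) (\<gamma> sy) (g r0)) (min (gromov_prod d (\<gamma> sy) (\<gamma> sz) (g r0))
      (gromov_prod d (\<gamma> sz) (g rz) (g r0))) - 2 * \<delta> \<le> gromov_prod d (g ry) (g rz) (g r0)"
    using M x0 by (intro gromov_prod_three_links[OF fp \<delta>])
  moreover have "gromov_prod d (g ry) (g rz) (g r0) = 0"
    using gromov_prod_geodesic_eq_0[OF geo] r by (simp add: D_def)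
  moreover have "\<delta> * (log 2 (6 * lam^3 * Q + 2) + 3) = \<delta> * (log 2 (6 * lam^3 * Q + 2) + 1) + 2 * \<delta>"
    by (simp add: algebra_simps)
  ultimately show ?thesis by linarith
qed

lemma geodesic_near_quasi_geodesic:
  assumes r: "r \<in> {0..d (\<gamma> a) (\<gamma> b)}"
  shows "\<exists>t\<in>{a..b}. d (g r) (\<gamma> t) \<le> morse_radius lam \<delta>"
proof -
  define D where "D = d (\<gamma> a) (\<gamma> b)"
  define \<rho> where "\<rho> r = Inf ((\<lambda>t. d (g r) (\<gamma> t)) ` {a..b})" for r
  have bdd: "bdd_below ((\<lambda>t. d (g r) (\<gamma> t)) ` {a..b})" for r
    by (rule bdd_belowI[where m = 0]) auto
  have \<rho>_le: "\<rho> r \<le> d (g r) (\<gamma> t)" if "t \<in> {a..b}" for r t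
    unfolding \<rho>_def using that bdd by (intro cInf_lower) auto
  have \<rho>_nonneg: "0 \<le> \<rho> r" for r
    unfolding \<rho>_def using ab by (intro cInf_greatest) auto
  have \<rho>_attained: "\<exists>t\<in>{a..b}. d (g r) (\<gamma> t) < \<rho> r + 1" for r
    using cInf_less_iff[OF _ bdd, of r "\<rho> r + 1"] ab unfolding \<rho>_def by auto
  define Dm where "Dm = Sup (\<rho> ` {0..D})"
  have "\<rho> r \<le> D" if "r \<in> {0..D}" for r
    using \<rho>_le[of a r] ab geodesic_dist[of r 0] g0 that by (simp add: D_def)
  then have bdd': "bdd_above (\<rho> ` {0..D})" by (intro bdd_aboveI[where M = D]) auto
  have Dm: "\<rho> r \<le> Dm" if "r \<in> {0..D}" for r
    unfolding Dm_def using that bdd' by (intro cSup_upper) auto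
  have "0 \<le> D" by (simp add: D_def)
  then have Dm0: "0 \<le> Dm" using Dm[of 0] \<rho>_nonneg[of 0] by simp
  obtain r0 where r0: "r0 \<in> {0..D}" "Dm - 1 < \<rho> r0"
    using less_cSup_iff[OF _ bdd', of "Dm - 1"] \<open>0 \<le> D\<close> unfolding Dm_def by force
  \<comment> \<open>\<open>g r0\<close> is almost as far from the quasi-geodesic as any point of the geodesic\<close>
  have "\<forall>r\<in>{0..D}. \<exists>t\<in>{a..b}. d (g r) (\<gamma> t) \<le> Dm + 1"
    using \<rho>_attained Dm by (meson add_le_cancel_right less_le_trans order_less_imp_le)
  moreover have "\<forall>t\<in>{a..b}. Dm - 1 \<le> d (\<gamma> t) (g r0)"
  proof
    fix t assume "t \<in> {a..b}"
    then show "Dm - 1 \<le> d (\<gamma> t) (g r0)"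
      using \<rho>_le[of t r0] r0(2) commute[of "\<gamma> t" "g r0"] by linarith
  qed
  ultimately have "Dm - 1 \<le> 1/2 + \<delta> * (log 2 (6 * lam^3 * (Dm + 1) + 2) + 3)"
    using far_point_le[of r0 "Dm + 1" "Dm - 1"] r0 Dm0 by (simp add: D_def)
  then have "Dm + 1 \<le> morse_radius lam \<delta>"
    using \<delta> lam Dm0 by (intro morse_radius_ge) auto
  then show ?thesis
    using \<rho>_attained[of r] Dm[of r] r by (force simp: D_def)
qed

lemma exists_quasi_geodesic_samples:
  assumes near: "\<forall>r\<in>{0..d (\<gamma> a) (\<gamma> b)}. \<exists>t\<in>{a..b}. d (g r) (\<gamma> t) \<le> Q" and "0 \<le> Q"
  obtains \<rho> \<sigma> m where "\<And>j. \<rho> j \<in> {0..d (\<gamma> a) (\<gamma> b)}" "\<And>j. \<bar>\<rho> (Suc j) - \<rho> j\<bar> \<le> 1"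
    "\<sigma> 0 = a" "\<sigma> m = b" "\<And>j. \<sigma> j \<in> {a..b}" "\<And>j. d (g (\<rho> j)) (\<gamma> (\<sigma> j)) \<le> Q"
proof -
  define D where "D = d (\<gamma> a) (\<gamma> b)"
  define m where "m = nat \<lceil>D\<rceil> + 1"
  define \<rho> where "\<rho> j = min (real j) D" for j
  have "real (nat \<lceil>D\<rceil>) = of_int \<lceil>D\<rceil>" by (simp add: D_def)
  then have "D \<le> real m" using le_of_int_ceiling[of D] by (simp add: m_def) linarith
  then have \<rho>: "\<rho> j \<in> {0..D}" "\<rho> 0 = 0" "\<rho> m = D" "\<bar>\<rho> (Suc j) - \<rho> j\<bar> \<le> 1" for j
    by (auto simp: \<rho>_def D_def)
  define \<sigma> where "\<sigma> j = (if j = 0 then a else if j = m then b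
      else SOME t. t \<in> {a..b} \<and> d (g (\<rho> j)) (\<gamma> t) \<le> Q)" for j
  have "\<sigma> j \<in> {a..b} \<and> d (g (\<rho> j)) (\<gamma> (\<sigma> j)) \<le> Q" for j
  proof -
    consider "j = 0" | "j = m" | "j \<noteq> 0" "j \<noteq> m" by blast
    then show ?thesis
    proof cases
      case 3
      have "\<exists>t. t \<in> {a..b} \<and> d (g (\<rho> j)) (\<gamma> t) \<le> Q"
        using near \<rho>(1)[of j] unfolding D_def by blast
      from someI_ex[OF this] show ?thesis using 3 by (simp add: \<sigma>_def)
    qed (use \<rho> g0 gD ab \<open>0 \<le> Q\<close> quasi_geodesic_in[OF qg] in \<open>auto simp: \<sigma>_def D_def m_def\<close>)
  qed
  then show ?thesis
    using \<rho>(1,4) by (intro that[of \<rho> \<sigma> m]) (simp_all add: \<sigma>_def m_def D_def)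
qed

lemma quasi_geodesic_near_geodesic:
  assumes near: "\<forall>r\<in>{0..d (\<gamma> a) (\<gamma> b)}. \<exists>t\<in>{a..b}. d (g r) (\<gamma> t) \<le> Q" and "0 \<le> Q"
    and t0: "t0 \<in> {a..b}"
  shows "\<exists>r\<in>{0..d (\<gamma> a) (\<gamma> b)}. d (g r) (\<gamma> t0) \<le> lam^2 * (2 * Q + 1) + Q"
proof (cases "t0 = b")
  case True
  then show ?thesis
    using gD quasi_geodesic_in[OF qg] ab \<open>0 \<le> Q\<close>
    by (intro bexI[of _ "d (\<gamma> a) (\<gamma> b)"]) auto
next
  case False
  obtain \<rho> \<sigma> m where \<rho>: "\<And>j. \<rho> j \<in> {0..d (\<gamma> a) (\<gamma> b)}" "\<And>j. \<bar>\<rho> (Suc j) - \<rho> j\<bar> \<le> 1"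
    and \<sigma>: "\<sigma> 0 = a" "\<sigma> m = b" "\<And>j. \<sigma> j \<in> {a..b}" "\<And>j. d (g (\<rho> j)) (\<gamma> (\<sigma> j)) \<le> Q"
    using exists_quasi_geodesic_samples[OF near \<open>0 \<le> Q\<close>] by metis
  obtain j where j: "j < m" "\<sigma> j \<le> t0" "t0 < \<sigma> (Suc j)"
    using exists_step_crossing[of \<sigma> t0 m] t0 False \<sigma>(1,2) by auto
  have M: "g (\<rho> j) \<in> M" "g (\<rho> (Suc j)) \<in> M" "\<gamma> (\<sigma> j) \<in> M" "\<gamma> (\<sigma> (Suc j)) \<in> M"
    using \<rho> \<sigma> geodesic_in quasi_geodesic_in[OF qg] by simp_all
  \<comment> \<open>consecutive samples are close, hence so are their parameters, which enclose \<open>t0\<close>\<close>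
  have "d (\<gamma> (\<sigma> (Suc j))) (\<gamma> (\<sigma> j))
      \<le> d (\<gamma> (\<sigma> (Suc j))) (g (\<rho> (Suc j))) + d (g (\<rho> (Suc j))) (\<gamma> (\<sigma> j))"
    using M by (intro triangle) auto
  moreover have "d (g (\<rho> (Suc j))) (\<gamma> (\<sigma> j)) \<le> d (g (\<rho> (Suc j))) (g (\<rho> j)) + d (g (\<rho> j)) (\<gamma> (\<sigma> j))"
    using M by (intro triangle) auto
  moreover have "d (g (\<rho> (Suc j))) (g (\<rho> j)) \<le> 1"
    using \<rho> geodesic_dist by simp
  ultimately have "d (\<gamma> (\<sigma> (Suc j))) (\<gamma> (\<sigma> j)) \<le> 2 * Q + 1"
    using \<sigma>(4)[of j] \<sigma>(4)[of "Suc j"] commute[of "\<gamma> (\<sigma> (Suc j))" "g (\<rho> (Suc j))"] by linarith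
  then have "lam * d (\<gamma> (\<sigma> (Suc j))) (\<gamma> (\<sigma> j)) \<le> lam * (2 * Q + 1)"
    using lam by (intro mult_left_mono) auto
  then have "\<sigma> (Suc j) - \<sigma> j \<le> lam * (2 * Q + 1)"
    using quasi_geodesic_ge[OF qg _ \<sigma>(3)[of j] \<sigma>(3)[of "Suc j"]] lam by linarith
  then have "lam * \<bar>t0 - \<sigma> j\<bar> \<le> lam * (lam * (2 * Q + 1))"
    using j lam by (intro mult_left_mono) auto
  then have "d (\<gamma> t0) (\<gamma> (\<sigma> j)) \<le> lam^2 * (2 * Q + 1)"
    using quasi_geodesic_le[OF qg \<sigma>(3)[of j] t0] by (simp add: power2_eq_square)
  moreover have "d (g (\<rho> j)) (\<gamma> t0) \<le> d (g (\<rho> j)) (\<gamma> (\<sigma> j)) + d (\<gamma> (\<sigma> j)) (\<gamma> t0)"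
    using M quasi_geodesic_in[OF qg t0] by (intro triangle) auto
  ultimately show ?thesis
    using \<sigma>(4)[of j] \<rho>(1)[of j] commute[of "\<gamma> t0" "\<gamma> (\<sigma> j)"] by (intro bexI[of _ "\<rho> j"]) auto
qed

lemma gromov_prod_quasi_geodesic_le:
  assumes t: "t \<in> {a..b}"
  shows "gromov_prod d (\<gamma> a) (\<gamma> b) (\<gamma> t) \<le> lam^2 * (2 * morse_radius lam \<delta> + 1) + morse_radius lam \<delta>"
proof -
  have "0 \<le> morse_radius lam \<delta>" using \<delta> lam by (intro morse_radius_nonneg) auto
  then obtain r where r: "r \<in> {0..d (\<gamma> a) (\<gamma> b)}"
    and close: "d (g r) (\<gamma> t) \<le> lam^2 * (2 * morse_radius lam \<delta> + 1) + morse_radius lam \<delta>"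
    using quasi_geodesic_near_geodesic geodesic_near_quasi_geodesic t by blast
  have "gromov_prod d (\<gamma> a) (\<gamma> b) (\<gamma> t) \<le> gromov_prod d (\<gamma> a) (\<gamma> b) (g r) + d (g r) (\<gamma> t)"
    using r t ab geodesic_in quasi_geodesic_in[OF qg] by (intro gromov_prod_le_add_dist) auto
  moreover have "gromov_prod d (\<gamma> a) (\<gamma> b) (g r) = 0"
    using gromov_prod_geodesic_eq_0[OF geo, of 0 r "d (\<gamma> a) (\<gamma> b)"] r g0 gD by simp
  ultimately show ?thesis using close by simp
qed

end

lemma quasi_geodesic_gromov_prod_le:
  assumes geo: "geodesic_space M d" and fp: "gromov_four_point M d \<delta>" "0 \<le> \<delta>"
    and qg: "quasi_geodesic M d lam \<gamma> {a..b}" "1 \<le> lam" and t: "t \<in> {a..b}"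
  shows "gromov_prod d (\<gamma> a) (\<gamma> b) (\<gamma> t) \<le> lam^2 * (2 * morse_radius lam \<delta> + 1) + morse_radius lam \<delta>"
proof -
  have ab: "a \<le> b" using t by simp
  then obtain g where "geodesic_segment M d g (d (\<gamma> a) (\<gamma> b))" "g 0 = \<gamma> a" "g (d (\<gamma> a) (\<gamma> b)) = \<gamma> b"
    using geo quasi_geodesic_in[OF qg(1)] unfolding geodesic_space_def geodesic_segment_def
    by (metis atLeastAtMost_iff order_refl)
  then show ?thesis
    using gromov_prod_quasi_geodesic_le[OF fp qg(1,2) ab] t by blast
qed

end

section \<open>Finsler distance near the boundary\<close>

lemma bdist_le_add_norm: "bdist \<Omega> x \<le> bdist \<Omega> y + norm (x - y)"
  unfolding bdist_def using infdist_triangle[of x "frontier \<Omega>" y] by (simp add: dist_norm)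

locale finsler_domain = Metric_space \<Omega> "finsler_dist \<Omega> F"
  for \<Omega> :: "(complex^'n) set" and F :: "complex^'n \<Rightarrow> complex^'n \<Rightarrow> real" +
  fixes C2 \<beta> :: real
  assumes open_domain: "open \<Omega>" and bounded_domain: "bounded \<Omega>"
    and finsler: "finsler_metric \<Omega> F"
    and F_ge: "\<forall>z\<in>\<Omega>. \<forall>X. X \<noteq> 0 \<longrightarrow> F z X \<ge> C2 * norm X / (bdist \<Omega> z) powr \<beta>"
    and C2_pos: "0 < C2" and \<beta>_pos: "0 < \<beta>"
begin

lemma bdist_pos: "z \<in> \<Omega> \<Longrightarrow> 0 < bdist \<Omega> z"
proof -
  assume z: "z \<in> \<Omega>"
  have "\<Omega> \<noteq> UNIV" using bounded_domain not_bounded_UNIV by auto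
  then have "frontier \<Omega> \<noteq> {}" using z frontier_eq_empty by blast
  moreover have "z \<notin> frontier \<Omega>" using z open_domain by (simp add: frontier_def interior_open)
  ultimately show ?thesis unfolding bdist_def
    by (intro infdist_pos_not_in_closed) (auto simp: frontier_closed)
qed

lemma F_ge_of_bdist_le:
  assumes "z \<in> \<Omega>" "bdist \<Omega> z \<le> B"
  shows "C2 / B powr \<beta> * norm X \<le> F z X"
proof (cases "X = 0")
  case True
  then show ?thesis using finsler assms by (simp add: finsler_metric_def)
next
  case False
  have z: "0 < bdist \<Omega> z" using bdist_pos[OF assms(1)] .
  then have "bdist \<Omega> z powr \<beta> \<le> B powr \<beta>"
    using assms \<beta>_pos by (intro powr_mono2) auto
  moreover have "0 < B" using z assms by linarith
  ultimately have "C2 * norm X / B powr \<beta> \<le> C2 * norm X / bdist \<Omega> z powr \<beta>"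
    using z C2_pos by (intro divide_left_mono) auto
  also have "\<dots> \<le> F z X" using F_ge assms False by auto
  finally show ?thesis by simp
qed

lemma finsler_length_ge_displacement:
  assumes c: "c \<in> curves \<Omega> p q" and s: "s \<in> {0..1}"
    and B: "\<forall>t\<in>{0..s}. bdist \<Omega> (c t) \<le> B"
  shows "ennreal (C2 / B powr \<beta> * norm (c s - p)) \<le> finsler_length F c"
proof -
  define K where "K = C2 / B powr \<beta>"
  define c' where "c' t = vector_derivative c (at t)" for t
  have c0: "c 0 = p" and cin: "c ` {0..1} \<subseteq> \<Omega>" using c by (auto simp: curves_def)
  obtain S where S: "finite S" "c C1_differentiable_on {0..1} - S" and cc: "continuous_on {0..1} c"
    using c by (auto simp: curves_def piecewise_C1_differentiable_on_def)
  have "(c has_vector_derivative c' t) (at t)" if "t \<in> {0<..<s} - S" for t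
    using that s S(2) unfolding c'_def C1_differentiable_on_eq
    by (intro vector_derivative_works[THEN iffD1]) auto
  then have "(c' has_integral (c s - c 0)) {0..s}"
    using s by (intro fundamental_theorem_of_calculus_interior_strong[OF S(1)])
      (auto intro: continuous_on_subset[OF cc])
  then have "((\<lambda>t. K *\<^sub>R c' t) has_integral K *\<^sub>R (c s - p)) {0..s}"
    unfolding c0 by (rule has_integral_cmul)
  then have "ennreal (norm (K *\<^sub>R (c s - p))) \<le> (\<integral>\<^sup>+t\<in>{0..s}. ennreal (norm (K *\<^sub>R c' t)) \<partial>lborel)"
    by (rule nn_integral_norm_ge_norm)
  also have "\<dots> \<le> finsler_length F c"
    unfolding finsler_length_def c'_def[symmetric]
  proof (intro nn_integral_mono)
    fix t
    show "ennreal (norm (K *\<^sub>R c' t)) * indicator {0..s} t \<le> ennreal (F (c t) (c' t)) * indicator {0..1} t"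
    proof (cases "t \<in> {0..s}")
      case True
      then have ct: "c t \<in> \<Omega>" using s cin by auto
      then have "K * norm (c' t) \<le> F (c t) (c' t)"
        using F_ge_of_bdist_le[OF ct] B True by (simp add: K_def)
      moreover have "0 \<le> K"
        using B ct True bdist_pos[OF ct] C2_pos by (auto simp: K_def)
      ultimately show ?thesis using True s by (auto intro: ennreal_leI)
    qed simp
  qed
  finally show ?thesis
    using C2_pos by (simp add: K_def)
qed

lemma finsler_dist_ge_of_curves:
  assumes "p \<in> \<Omega>" "q \<in> \<Omega>" "p \<noteq> q"
    and L: "\<And>c. c \<in> curves \<Omega> p q \<Longrightarrow> ennreal v \<le> finsler_length F c"
  shows "v \<le> finsler_dist \<Omega> F p q"
proof (cases "0 \<le> v")
  case True
  define I where "I = (INF c\<in>curves \<Omega> p q. finsler_length F c)"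
  have "ennreal v \<le> I" unfolding I_def using L by (auto intro: INF_greatest)
  \<comment> \<open>\<open>enn2real\<close> sends \<open>\<infinity>\<close> to \<open>0\<close>, which is excluded because \<open>d\<close> is a metric\<close>
  moreover have "I \<noteq> \<infinity>"
  proof
    assume "I = \<infinity>"
    then have "finsler_dist \<Omega> F p q = 0" by (simp add: finsler_dist_def I_def[symmetric])
    then show False using assms(1-3) by simp
  qed
  ultimately have "enn2real (ennreal v) \<le> enn2real I"
    by (intro enn2real_mono) (simp_all add: less_top)
  then show ?thesis
    using True by (simp add: finsler_dist_def I_def[symmetric])
qed (use local.nonneg[of p q] in linarith)

lemma finsler_length_ge_in_ball:
  assumes c: "c \<in> curves \<Omega> p q" and s: "s \<in> {0..1}" and ball: "\<forall>t\<in>{0..s}. norm (c t - p) \<le> r"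
  shows "ennreal (C2 / (bdist \<Omega> p + r) powr \<beta> * norm (c s - p)) \<le> finsler_length F c"
proof -
  have "bdist \<Omega> (c t) \<le> bdist \<Omega> p + r" if "t \<in> {0..s}" for t
    using ball that bdist_le_add_norm[of \<Omega> "c t" p] by force
  then show ?thesis by (intro finsler_length_ge_displacement[OF c s]) auto
qed

lemma finsler_dist_ge_local:
  assumes pq: "p \<in> \<Omega>" "q \<in> \<Omega>"
  shows "C2 * min (norm (q - p)) (bdist \<Omega> p / 2) / (3 * bdist \<Omega> p / 2) powr \<beta> \<le> finsler_dist \<Omega> F p q"
proof (cases "p = q")
  case False
  define r where "r = bdist \<Omega> p / 2"
  have r: "0 < r" "bdist \<Omega> p + r = 3 * r" using bdist_pos[OF pq(1)] by (simp_all add: r_def)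
  have "ennreal (C2 / (3 * r) powr \<beta> * min (norm (q - p)) r) \<le> finsler_length F c"
    if c: "c \<in> curves \<Omega> p q" for c
  proof -
    have c01: "c 0 = p" "c 1 = q" "continuous_on {0..1} c"
      using c by (auto simp: curves_def piecewise_C1_differentiable_on_def)
    note inside = finsler_length_ge_in_ball[OF c, of _ r, unfolded r(2)]
    show ?thesis
    proof (cases "\<exists>t\<in>{0..1}. r \<le> dist (c t) (c 0)")
      case True
      then obtain t where t: "t \<in> {0..1}" "r \<le> dist (c t) (c 0)" by blast
      then obtain s where s: "s \<in> {0..t}" "dist (c s) (c 0) = r" "\<forall>t\<in>{0..s}. dist (c t) (c 0) \<le> r"
        using exists_first_exit[of 0 t c r] continuous_on_subset[OF c01(3), of "{0..t}"] r by auto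
      then have "ennreal (C2 / (3 * r) powr \<beta> * r) \<le> finsler_length F c"
        using inside[of s] t c01 by (simp add: dist_norm)
      moreover have "C2 / (3 * r) powr \<beta> * min (norm (q - p)) r \<le> C2 / (3 * r) powr \<beta> * r"
        using C2_pos by (intro mult_left_mono) auto
      ultimately show ?thesis using ennreal_leI order_trans by blast
    next
      case False
      then have "\<forall>t\<in>{0..1}. norm (c t - p) \<le> r" using c01 by (auto simp: not_le dist_norm)
      then have "ennreal (C2 / (3 * r) powr \<beta> * norm (q - p)) \<le> finsler_length F c"
        using inside[of 1] c01 by simp
      moreover have "C2 / (3 * r) powr \<beta> * min (norm (q - p)) r \<le> C2 / (3 * r) powr \<beta> * norm (q - p)"
        using C2_pos by (intro mult_left_mono) auto
      ultimately show ?thesis using ennreal_leI order_trans by blast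
    qed
  qed
  then show ?thesis
    using finsler_dist_ge_of_curves[OF pq False] by (simp add: r_def mult.commute)
qed (use bdist_pos[OF pq(1)] in \<open>simp add: less_imp_le\<close>)

lemma norm_le_finsler_dist_local:
  assumes pq: "p \<in> \<Omega>" "q \<in> \<Omega>"
    and small: "finsler_dist \<Omega> F p q < C2 * (bdist \<Omega> p / 2) / (3 * bdist \<Omega> p / 2) powr \<beta>"
  shows "norm (q - p) \<le> (3 * bdist \<Omega> p / 2) powr \<beta> / C2 * finsler_dist \<Omega> F p q"
proof -
  define r where "r = bdist \<Omega> p / 2"
  have r: "0 < (3 * r) powr \<beta>" using bdist_pos[OF pq(1)] by (simp add: r_def)
  have local: "C2 * min (norm (q - p)) r / (3 * r) powr \<beta> \<le> finsler_dist \<Omega> F p q"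
    using finsler_dist_ge_local[OF pq] by (simp add: r_def)
  have small': "finsler_dist \<Omega> F p q < C2 * r / (3 * r) powr \<beta>"
    using small by (simp add: r_def)
  \<comment> \<open>a distance below the threshold forces the minimum to be attained by \<open>norm (q - p)\<close>\<close>
  have "norm (q - p) < r"
  proof (rule ccontr)
    assume "\<not> norm (q - p) < r"
    then have "min (norm (q - p)) r = r" by simp
    then show False using local small' by simp
  qed
  then have "C2 * norm (q - p) \<le> (3 * r) powr \<beta> * finsler_dist \<Omega> F p q"
    using local r by (simp add: divide_le_eq mult.commute)
  then show ?thesis
    using C2_pos by (simp add: r_def field_simps)
qed

end

section \<open>Quasi-geodesics in a hyperbolic Finsler domain\<close>

locale hyperbolic_finsler_domain = finsler_domain +
  fixes C1 \<alpha> \<delta> :: real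
  assumes \<beta>_le_1: "\<beta> \<le> 1" and \<alpha>_pos: "0 < \<alpha>" and C1_nonneg: "0 \<le> C1" and \<delta>_nonneg: "0 \<le> \<delta>"
    and four_point: "gromov_four_point \<Omega> (finsler_dist \<Omega> F) \<delta>"
    and geodesic: "geodesic_space \<Omega> (finsler_dist \<Omega> F)"
    and dist_ge_ln: "\<forall>x\<in>\<Omega>. \<forall>y\<in>\<Omega>. finsler_dist \<Omega> F x y \<ge> \<alpha> * \<bar>ln (bdist \<Omega> x / bdist \<Omega> y)\<bar> - C1"
begin

lemma ln_bdist_le:
  assumes "u \<in> \<Omega>" "v \<in> \<Omega>"
  shows "\<alpha> * ln (bdist \<Omega> u) \<le> \<alpha> * ln (bdist \<Omega> v) + finsler_dist \<Omega> F u v + C1"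
proof -
  have "ln (bdist \<Omega> u / bdist \<Omega> v) = ln (bdist \<Omega> u) - ln (bdist \<Omega> v)"
    using bdist_pos[OF assms(1)] bdist_pos[OF assms(2)] by (simp add: ln_div)
  then have "\<alpha> * \<bar>ln (bdist \<Omega> u) - ln (bdist \<Omega> v)\<bar> - C1 \<le> finsler_dist \<Omega> F u v"
    using dist_ge_ln assms by force
  moreover have "\<alpha> * (ln (bdist \<Omega> u) - ln (bdist \<Omega> v)) \<le> \<alpha> * \<bar>ln (bdist \<Omega> u) - ln (bdist \<Omega> v)\<bar>"
    using \<alpha>_pos by (intro mult_left_mono) auto
  ultimately show ?thesis
    by (simp add: right_diff_distrib)
qed

lemma bdist_le_exp_dist:
  assumes "u \<in> \<Omega>" "v \<in> \<Omega>"
  shows "bdist \<Omega> u \<le> exp ((finsler_dist \<Omega> F u v + C1) / \<alpha>) * bdist \<Omega> v"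
proof -
  have "ln (bdist \<Omega> u) \<le> ln (bdist \<Omega> v) + (finsler_dist \<Omega> F u v + C1) / \<alpha>"
    using ln_bdist_le[OF assms] \<alpha>_pos by (simp add: field_simps)
  then have "exp (ln (bdist \<Omega> u)) \<le> exp (ln (bdist \<Omega> v) + (finsler_dist \<Omega> F u v + C1) / \<alpha>)"
    by simp
  then show ?thesis
    using assms bdist_pos by (simp add: exp_add mult.commute)
qed

lemma bdist_le_exp_of_dist_le_1:
  assumes "u \<in> \<Omega>" "v \<in> \<Omega>" "finsler_dist \<Omega> F u v \<le> 1"
  shows "bdist \<Omega> u \<le> exp ((1 + C1) / \<alpha>) * bdist \<Omega> v"
proof -
  have "exp ((finsler_dist \<Omega> F u v + C1) / \<alpha>) \<le> exp ((1 + C1) / \<alpha>)"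
    using assms \<alpha>_pos by (simp add: divide_right_mono)
  then have "exp ((finsler_dist \<Omega> F u v + C1) / \<alpha>) * bdist \<Omega> v \<le> exp ((1 + C1) / \<alpha>) * bdist \<Omega> v"
    using bdist_pos[OF assms(2)] by (intro mult_right_mono) auto
  then show ?thesis using bdist_le_exp_dist[OF assms(1,2)] by linarith
qed

lemma ln_bdist_tent:
  assumes xyz: "x \<in> \<Omega>" "y \<in> \<Omega>" "z \<in> \<Omega>" and H: "gromov_prod (finsler_dist \<Omega> F) x y z \<le> H"
  defines "S \<equiv> \<alpha> * ln (bdist \<Omega> x) + \<alpha> * ln (bdist \<Omega> y) + finsler_dist \<Omega> F x y + 2 * H + 2 * C1"
    and "v \<equiv> finsler_dist \<Omega> F x y + 2 * H + \<alpha> * ln (bdist \<Omega> y) - \<alpha> * ln (bdist \<Omega> x)"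
  shows "2 * (\<alpha> * ln (bdist \<Omega> z)) \<le> S - \<bar>2 * finsler_dist \<Omega> F x z - v\<bar>"
proof -
  \<comment> \<open>the two bounds coming from the endpoints \<open>x\<close> and \<open>y\<close> cross where \<open>2 d(x, z) = v\<close>\<close>
  have "\<alpha> * ln (bdist \<Omega> z) \<le> \<alpha> * ln (bdist \<Omega> x) + finsler_dist \<Omega> F x z + C1"
    using ln_bdist_le[of z x] xyz commute[of z x] by simp
  moreover have "\<alpha> * ln (bdist \<Omega> z) \<le> \<alpha> * ln (bdist \<Omega> y) + finsler_dist \<Omega> F z y + C1"
    using ln_bdist_le[of z y] xyz by simp
  moreover have "finsler_dist \<Omega> F z y \<le> finsler_dist \<Omega> F x y + 2 * H - finsler_dist \<Omega> F x z"
    using H commute[of y z] by (simp add: gromov_prod_def)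
  ultimately have "\<bar>2 * finsler_dist \<Omega> F x z - v\<bar> \<le> S - 2 * (\<alpha> * ln (bdist \<Omega> z))"
    unfolding abs_le_iff S_def v_def by linarith
  then show ?thesis by linarith
qed

context
  fixes \<gamma> and a b lam H :: real
  assumes qg: "quasi_geodesic \<Omega> (finsler_dist \<Omega> F) lam \<gamma> {a..b}" and lam: "1 \<le> lam" and ab: "a < b"
    and morse: "\<forall>t\<in>{a..b}. gromov_prod (finsler_dist \<Omega> F) (\<gamma> a) (\<gamma> b) (\<gamma> t) \<le> H"
begin

lemma quasi_geodesic_in_domain: "t \<in> {a..b} \<Longrightarrow> \<gamma> t \<in> \<Omega>"
  by (rule quasi_geodesic_in[OF qg])

lemma morse_const_nonneg: "0 \<le> H"
  using morse[rule_format, of a] ab quasi_geodesic_in_domain commute[of "\<gamma> a" "\<gamma> b"]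
  by (simp add: gromov_prod_def)

lemma bdist_quasi_geodesic_ge: "\<exists>m>0. \<forall>t\<in>{a..b}. m \<le> bdist \<Omega> (\<gamma> t)"
proof (intro exI conjI ballI)
  define E where "E = exp ((lam * (b - a) + C1) / \<alpha>)"
  show "0 < bdist \<Omega> (\<gamma> a) / E"
    using bdist_pos quasi_geodesic_in_domain ab by (simp add: E_def)
  fix t assume t: "t \<in> {a..b}"
  have a: "a \<in> {a..b}" using ab by simp
  have "finsler_dist \<Omega> F (\<gamma> a) (\<gamma> t) \<le> lam * \<bar>t - a\<bar>"
    using quasi_geodesic_le[OF qg a t] commute[of "\<gamma> a" "\<gamma> t"] by simp
  also have "\<dots> \<le> lam * (b - a)" using t lam by (intro mult_left_mono) auto
  finally have "exp ((finsler_dist \<Omega> F (\<gamma> a) (\<gamma> t) + C1) / \<alpha>) \<le> E"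
    using \<alpha>_pos by (simp add: E_def divide_right_mono)
  then have "exp ((finsler_dist \<Omega> F (\<gamma> a) (\<gamma> t) + C1) / \<alpha>) * bdist \<Omega> (\<gamma> t) \<le> E * bdist \<Omega> (\<gamma> t)"
    using bdist_pos[OF quasi_geodesic_in_domain[OF t]] by (intro mult_right_mono) auto
  then have "bdist \<Omega> (\<gamma> a) \<le> E * bdist \<Omega> (\<gamma> t)"
    using bdist_le_exp_dist[OF quasi_geodesic_in_domain[OF a] quasi_geodesic_in_domain[OF t]] by linarith
  then show "bdist \<Omega> (\<gamma> a) / E \<le> bdist \<Omega> (\<gamma> t)"
    by (simp add: E_def divide_le_eq mult.commute)
qed

lemma quasi_geodesic_cell_le:
  assumes m: "0 < m" "\<forall>t\<in>{a..b}. m \<le> bdist \<Omega> (\<gamma> t)"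
    and h: "lam * h \<le> 1" "lam * h < C2 * (m / 2) / (3 * m / 2) powr \<beta>"
    and u: "u \<in> {a..b}" and st: "u \<le> s" "s \<le> t" "t \<le> u + h" "t \<le> b"
  shows "norm (\<gamma> t - \<gamma> s)
    \<le> (3 * exp ((1 + C1) / \<alpha>) / 2) powr \<beta> * lam / C2 * bdist \<Omega> (\<gamma> u) powr \<beta> * (t - s)"
proof -
  have s: "s \<in> {a..b}" and t: "t \<in> {a..b}" using u st by auto
  have \<Omega>: "\<gamma> s \<in> \<Omega>" "\<gamma> t \<in> \<Omega>" "\<gamma> u \<in> \<Omega>"
    using s t u quasi_geodesic_in_domain by auto
  have dst: "finsler_dist \<Omega> F (\<gamma> s) (\<gamma> t) \<le> lam * (t - s)"
    using quasi_geodesic_le[OF qg s t] commute[of "\<gamma> s" "\<gamma> t"] st by simp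
  also have "\<dots> \<le> lam * h" using lam st by (intro mult_left_mono) auto
  finally have "finsler_dist \<Omega> F (\<gamma> s) (\<gamma> t) < C2 * (m / 2) / (3 * m / 2) powr \<beta>"
    using h by linarith
  \<comment> \<open>the threshold of the local estimate only grows with the boundary distance since \<open>\<beta> \<le> 1\<close>\<close>
  also have "\<dots> \<le> C2 * (bdist \<Omega> (\<gamma> s) / 2) / (3 * bdist \<Omega> (\<gamma> s) / 2) powr \<beta>"
  proof -
    have "(m / 2) / (3 * m / 2) powr \<beta> \<le> (bdist \<Omega> (\<gamma> s) / 2) / (3 * bdist \<Omega> (\<gamma> s) / 2) powr \<beta>"
      using m s by (intro half_div_powr_mono \<beta>_le_1) auto
    then show ?thesis using C2_pos mult_left_mono by fastforce
  qed
  finally have "norm (\<gamma> t - \<gamma> s) \<le> (3 * bdist \<Omega> (\<gamma> s) / 2) powr \<beta> / C2 * finsler_dist \<Omega> F (\<gamma> s) (\<gamma> t)"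
    by (rule norm_le_finsler_dist_local[OF \<Omega>(1,2)])
  also have "\<dots> \<le> (3 * (exp ((1 + C1) / \<alpha>) * bdist \<Omega> (\<gamma> u)) / 2) powr \<beta> / C2 * (lam * (t - s))"
  proof -
    have "finsler_dist \<Omega> F (\<gamma> s) (\<gamma> u) \<le> lam * (s - u)"
      using quasi_geodesic_le[OF qg u s] commute[of "\<gamma> s" "\<gamma> u"] st by simp
    also have "\<dots> \<le> lam * h" using lam st by (intro mult_left_mono) auto
    also have "\<dots> \<le> 1" by (rule h(1))
    finally have "3 * bdist \<Omega> (\<gamma> s) / 2 \<le> 3 * (exp ((1 + C1) / \<alpha>) * bdist \<Omega> (\<gamma> u)) / 2"
      using bdist_le_exp_of_dist_le_1[OF \<Omega>(1,3)] by simp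
    then have "(3 * bdist \<Omega> (\<gamma> s) / 2) powr \<beta> \<le> (3 * (exp ((1 + C1) / \<alpha>) * bdist \<Omega> (\<gamma> u)) / 2) powr \<beta>"
      using \<beta>_pos bdist_pos[OF \<Omega>(1)] by (intro powr_mono2) auto
    then show ?thesis
      using dst C2_pos by (intro mult_mono divide_right_mono) auto
  qed
  also have "\<dots> = (3 * exp ((1 + C1) / \<alpha>) / 2) powr \<beta> * lam / C2 * bdist \<Omega> (\<gamma> u) powr \<beta> * (t - s)"
    using bdist_pos[OF \<Omega>(3)] by (simp add: powr_mult [symmetric] mult_ac)
  finally show ?thesis .
qed

lemma quasi_geodesic_param_le:
  assumes "s \<in> {a..b}" "t \<in> {a..b}"
  shows "\<bar>t - s\<bar> \<le> lam * (\<bar>finsler_dist \<Omega> F (\<gamma> a) (\<gamma> t) - finsler_dist \<Omega> F (\<gamma> a) (\<gamma> s)\<bar> + 2 * H + 2 * \<delta>)"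
proof -
  have "finsler_dist \<Omega> F (\<gamma> t) (\<gamma> s)
      \<le> \<bar>finsler_dist \<Omega> F (\<gamma> a) (\<gamma> t) - finsler_dist \<Omega> F (\<gamma> a) (\<gamma> s)\<bar> + 2 * H + 2 * \<delta>"
    using assms ab morse quasi_geodesic_in_domain
    by (intro dist_le_of_gromov_prod_le[OF four_point, where y = "\<gamma> b"]) auto
  then have "lam * finsler_dist \<Omega> F (\<gamma> t) (\<gamma> s)
      \<le> lam * (\<bar>finsler_dist \<Omega> F (\<gamma> a) (\<gamma> t) - finsler_dist \<Omega> F (\<gamma> a) (\<gamma> s)\<bar> + 2 * H + 2 * \<delta>)"
    using lam by (intro mult_left_mono) auto
  then show ?thesis
    using quasi_geodesic_ge[OF qg _ assms] lam by linarith
qed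

lemma exists_balanced_grid_point:
  assumes h: "0 < h" "lam * h \<le> 1" and N: "b = a + real N * h"
  defines "v \<equiv> finsler_dist \<Omega> F (\<gamma> a) (\<gamma> b) + 2 * H + \<alpha> * ln (bdist \<Omega> (\<gamma> b)) - \<alpha> * ln (bdist \<Omega> (\<gamma> a))"
  shows "\<exists>k0\<le>N. \<bar>2 * finsler_dist \<Omega> F (\<gamma> a) (\<gamma> (a + real k0 * h)) - v\<bar> \<le> 2 + 2 * H + C1"
proof -
  define u where "u k = finsler_dist \<Omega> F (\<gamma> a) (\<gamma> (a + real k * h))" for k
  have grid: "a + real k * h \<in> {a..b}" if "k \<le> N" for k
    using that h N mult_right_mono[of "real k" "real N" h] by auto
  have \<Omega>: "\<gamma> a \<in> \<Omega>" "\<gamma> b \<in> \<Omega>" using ab quasi_geodesic_in_domain by auto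
  have u0: "u 0 = 0" and uN: "u N = finsler_dist \<Omega> F (\<gamma> a) (\<gamma> b)"
    using \<Omega> N by (simp_all add: u_def)
  have steps: "\<bar>u (Suc k) - u k\<bar> \<le> 1" if "k < N" for k
  proof -
    let ?p = "\<gamma> (a + real k * h)" and ?q = "\<gamma> (a + real (Suc k) * h)"
    have pq: "?p \<in> \<Omega>" "?q \<in> \<Omega>"
      using grid[of k] grid[of "Suc k"] that quasi_geodesic_in_domain by auto
    have "finsler_dist \<Omega> F ?q ?p \<le> lam * \<bar>real (Suc k) * h - real k * h\<bar>"
      using quasi_geodesic_le[OF qg grid[of k] grid[of "Suc k"]] that by simp
    also have "\<dots> \<le> 1" using h by (simp add: algebra_simps)
    finally show ?thesis
      using triangle[OF \<Omega>(1) pq(1,2)] triangle[OF \<Omega>(1) pq(2,1)] commute[of ?q ?p]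
      by (simp add: u_def abs_le_iff)
  qed
  have "\<bar>\<alpha> * ln (bdist \<Omega> (\<gamma> b)) - \<alpha> * ln (bdist \<Omega> (\<gamma> a))\<bar> \<le> finsler_dist \<Omega> F (\<gamma> a) (\<gamma> b) + C1"
    using ln_bdist_le[OF \<Omega>] ln_bdist_le[OF \<Omega>(2,1)] commute[of "\<gamma> a" "\<gamma> b"] by (simp add: abs_le_iff)
  then have ends: "- v \<le> C1" "v - 2 * u N \<le> 2 * H + C1"
    using morse_const_nonneg uN by (auto simp: v_def abs_le_iff)
  consider "v < 2 * u 0" | "2 * u N < v" | "u 0 \<le> v / 2" "v / 2 \<le> u N" by linarith
  then show ?thesis
  proof cases
    case 1
    then show ?thesis
      using ends u0 morse_const_nonneg by (intro exI[of _ 0]) (auto simp: u_def)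
  next
    case 2
    then show ?thesis
      using ends morse_const_nonneg C1_nonneg by (intro exI[of _ N]) (auto simp: u_def)
  next
    case 3
    then obtain k where "k \<le> N" "\<bar>u k - v / 2\<bar> \<le> 1"
      using exists_close_of_steps_le_one[of N u "v / 2"] steps by blast
    then show ?thesis
      using morse_const_nonneg C1_nonneg by (intro exI[of _ k]) (auto simp: u_def abs_le_iff)
  qed
qed

lemma bdist_quasi_geodesic_decay:
  fixes t0 t :: real
  defines "v \<equiv> finsler_dist \<Omega> F (\<gamma> a) (\<gamma> b) + 2 * H + \<alpha> * ln (bdist \<Omega> (\<gamma> b)) - \<alpha> * ln (bdist \<Omega> (\<gamma> a))"
    and "\<Lambda> \<equiv> (ln (bdist \<Omega> (\<gamma> a)) + ln (bdist \<Omega> (\<gamma> b))) / 2 + finsler_dist \<Omega> F (\<gamma> a) (\<gamma> b) / (2 * \<alpha>)"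
  assumes t0: "t0 \<in> {a..b}" and t: "t \<in> {a..b}"
    and balanced: "\<bar>2 * finsler_dist \<Omega> F (\<gamma> a) (\<gamma> t0) - v\<bar> \<le> 2 + 2 * H + C1"
  shows "bdist \<Omega> (\<gamma> t) powr \<beta>
    \<le> exp (\<beta> * (4 * H + 2 * \<delta> + 1 + 3 * C1 / 2) / \<alpha>) * exp (\<beta> * \<Lambda>) * exp (- (\<beta> / (lam * \<alpha>) * \<bar>t - t0\<bar>))"
proof -
  let ?u = "\<lambda>s. finsler_dist \<Omega> F (\<gamma> a) (\<gamma> s)"
  define Y where "Y = \<Lambda> + (4 * H + 2 * \<delta> + 1 + 3 * C1 / 2) / \<alpha> - \<bar>t - t0\<bar> / (lam * \<alpha>)"
  have \<Omega>: "\<gamma> a \<in> \<Omega>" "\<gamma> b \<in> \<Omega>" "\<gamma> t \<in> \<Omega>" using ab t quasi_geodesic_in_domain by auto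
  \<comment> \<open>\<open>\<gamma> t\<close> lies at distance about \<open>\<bar>t - t0\<bar> / lam\<close> from the top of the tent at \<open>\<gamma> t0\<close>\<close>
  have "2 * (\<alpha> * ln (bdist \<Omega> (\<gamma> t))) \<le> \<alpha> * ln (bdist \<Omega> (\<gamma> a)) + \<alpha> * ln (bdist \<Omega> (\<gamma> b))
      + finsler_dist \<Omega> F (\<gamma> a) (\<gamma> b) + 2 * H + 2 * C1 - \<bar>2 * ?u t - v\<bar>"
    using ln_bdist_tent[OF \<Omega>] morse t by (simp add: v_def)
  moreover have "\<bar>t - t0\<bar> / lam \<le> \<bar>?u t - ?u t0\<bar> + 2 * H + 2 * \<delta>"
    using quasi_geodesic_param_le[OF t0 t] lam by (simp add: divide_le_eq mult.commute)
  moreover have "\<alpha> * Y = \<alpha> * ln (bdist \<Omega> (\<gamma> a)) / 2 + \<alpha> * ln (bdist \<Omega> (\<gamma> b)) / 2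
      + finsler_dist \<Omega> F (\<gamma> a) (\<gamma> b) / 2 + (4 * H + 2 * \<delta> + 1 + 3 * C1 / 2) - \<bar>t - t0\<bar> / lam"
    using \<alpha>_pos lam by (simp add: Y_def \<Lambda>_def field_simps)
  ultimately have "\<alpha> * ln (bdist \<Omega> (\<gamma> t)) \<le> \<alpha> * Y"
    using balanced by (simp add: abs_le_iff) linarith
  then have "\<beta> * ln (bdist \<Omega> (\<gamma> t)) \<le> \<beta> * Y"
    using \<alpha>_pos \<beta>_pos by simp
  then have "bdist \<Omega> (\<gamma> t) powr \<beta> \<le> exp (\<beta> * Y)"
    using bdist_pos[OF \<Omega>(3)] by (simp add: powr_def mult.commute)
  also have "\<dots> = exp (\<beta> * (4 * H + 2 * \<delta> + 1 + 3 * C1 / 2) / \<alpha>) * exp (\<beta> * \<Lambda>) * exp (- (\<beta> / (lam * \<alpha>) * \<bar>t - t0\<bar>))"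
    by (simp add: Y_def exp_add [symmetric] exp_diff [symmetric] algebra_simps)
  finally show ?thesis .
qed

lemma exists_quasi_geodesic_grid:
  obtains N h where "1 \<le> N" "0 < h" "lam * h \<le> 1" "b = a + real N * h"
    "\<And>k s t. k < N \<Longrightarrow> a + real k * h \<le> s \<Longrightarrow> s \<le> t \<Longrightarrow> t \<le> a + real (Suc k) * h \<Longrightarrow>
       norm (\<gamma> t - \<gamma> s) \<le> (3 * exp ((1 + C1) / \<alpha>) / 2) powr \<beta> * lam / C2
         * bdist \<Omega> (\<gamma> (a + real k * h)) powr \<beta> * (t - s)"
proof -
  obtain m where m: "0 < m" "\<forall>t\<in>{a..b}. m \<le> bdist \<Omega> (\<gamma> t)"
    using bdist_quasi_geodesic_ge by blast
  define thr where "thr = C2 * (m / 2) / (3 * m / 2) powr \<beta>"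
  have thr: "0 < thr" using m C2_pos by (simp add: thr_def)
  then obtain N h where grid: "1 \<le> N" "0 < h" "h \<le> min (1 / lam) (thr / (2 * lam))" "b = a + real N * h"
    using exists_uniform_grid[OF ab, of "min (1 / lam) (thr / (2 * lam))"] lam by auto
  have "lam * h \<le> lam * (1 / lam)" "lam * h \<le> lam * (thr / (2 * lam))"
    using grid lam by (intro mult_left_mono; simp)+
  then have lamh: "lam * h \<le> 1" "lam * h < thr"
    using lam thr by auto
  have cells: "norm (\<gamma> t - \<gamma> s) \<le> (3 * exp ((1 + C1) / \<alpha>) / 2) powr \<beta> * lam / C2
      * bdist \<Omega> (\<gamma> (a + real k * h)) powr \<beta> * (t - s)"
    if "k < N" "a + real k * h \<le> s" "s \<le> t" "t \<le> a + real (Suc k) * h" for k s t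
  proof -
    have "real (Suc k) * h \<le> real N * h" using that grid by (intro mult_right_mono) auto
    then show ?thesis
      using quasi_geodesic_cell_le[OF m lamh[unfolded thr_def], of "a + real k * h" s t] that grid
        mult_right_mono[of "real k" "real N" h]
      by (simp add: algebra_simps)
  qed
  show ?thesis by (rule that[of N h]) (use grid lamh cells in auto)
qed

lemma euclid_length_quasi_geodesic_le:
  defines "c \<equiv> \<beta> / (lam * \<alpha>)"
    and "\<Lambda> \<equiv> (ln (bdist \<Omega> (\<gamma> a)) + ln (bdist \<Omega> (\<gamma> b))) / 2 + finsler_dist \<Omega> F (\<gamma> a) (\<gamma> b) / (2 * \<alpha>)"
  shows "norm (\<gamma> b - \<gamma> a) \<le> euclid_length \<gamma> a b"
    and "euclid_length \<gamma> a b \<le> (3 * exp ((1 + C1) / \<alpha>) / 2) powr \<beta> * lam / C2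
           * exp (\<beta> * (4 * H + 2 * \<delta> + 1 + 3 * C1 / 2) / \<alpha>) * (2 * (1 + c) / c) * exp (\<beta> * \<Lambda>)"
proof -
  define A where "A = (3 * exp ((1 + C1) / \<alpha>) / 2) powr \<beta> * lam / C2"
  define B where "B = exp (\<beta> * (4 * H + 2 * \<delta> + 1 + 3 * C1 / 2) / \<alpha>)"
  obtain N h where grid: "1 \<le> N" "0 < h" "lam * h \<le> 1" "b = a + real N * h"
    and cells: "\<And>k s t. k < N \<Longrightarrow> a + real k * h \<le> s \<Longrightarrow> s \<le> t \<Longrightarrow> t \<le> a + real (Suc k) * h \<Longrightarrow>
       norm (\<gamma> t - \<gamma> s) \<le> A * bdist \<Omega> (\<gamma> (a + real k * h)) powr \<beta> * (t - s)"
    using exists_quasi_geodesic_grid unfolding A_def by metis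
  define \<tau> where "\<tau> k = a + real k * h" for k
  have \<tau>: "\<tau> k \<in> {a..b}" if "k \<le> N" for k
    using that grid mult_right_mono[of "real k" "real N" h] by (auto simp: \<tau>_def)
  define w where "w k = A * bdist \<Omega> (\<gamma> (\<tau> k)) powr \<beta>" for k
  have A: "0 \<le> A" using lam C2_pos by (simp add: A_def)
  note length = euclid_length_le_grid[of h b a N w \<gamma>, OF grid(2,4)]
  have w: "0 \<le> w k" for k using A by (simp add: w_def)
  show "norm (\<gamma> b - \<gamma> a) \<le> euclid_length \<gamma> a b"
    using length(1)[OF w] cells by (simp add: w_def \<tau>_def)
  obtain k0 where k0: "k0 \<le> N"
    "\<bar>2 * finsler_dist \<Omega> F (\<gamma> a) (\<gamma> (\<tau> k0)) - (finsler_dist \<Omega> F (\<gamma> a) (\<gamma> b) + 2 * H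
        + \<alpha> * ln (bdist \<Omega> (\<gamma> b)) - \<alpha> * ln (bdist \<Omega> (\<gamma> a)))\<bar> \<le> 2 + 2 * H + C1"
    using exists_balanced_grid_point[OF grid(2,3,4)] by (auto simp: \<tau>_def)
  \<comment> \<open>the decay away from \<open>\<tau> k0\<close> turns \<open>h * (\<Sum>k<N. w k)\<close> into a convergent geometric sum\<close>
  have "w k \<le> A * (B * exp (\<beta> * \<Lambda>) * exp (- (c * h) * \<bar>real k - real k0\<bar>))" if "k < N" for k
  proof -
    have "\<tau> k - \<tau> k0 = h * (real k - real k0)" by (simp add: \<tau>_def algebra_simps)
    then have "\<bar>\<tau> k - \<tau> k0\<bar> = h * \<bar>real k - real k0\<bar>" using grid(2) by (simp add: abs_mult)
    then have "- (\<beta> / (lam * \<alpha>) * \<bar>\<tau> k - \<tau> k0\<bar>) = - (c * h) * \<bar>real k - real k0\<bar>"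
      by (simp add: c_def)
    moreover have "bdist \<Omega> (\<gamma> (\<tau> k)) powr \<beta> \<le> B * exp (\<beta> * \<Lambda>) * exp (- (\<beta> / (lam * \<alpha>) * \<bar>\<tau> k - \<tau> k0\<bar>))"
      unfolding B_def \<Lambda>_def using that by (intro bdist_quasi_geodesic_decay \<tau> k0) auto
    ultimately show ?thesis using A by (simp add: w_def mult_left_mono)
  qed
  then have "h * (\<Sum>k<N. w k) \<le> h * (\<Sum>k<N. A * (B * exp (\<beta> * \<Lambda>) * exp (- (c * h) * \<bar>real k - real k0\<bar>)))"
    using grid by (intro mult_left_mono sum_mono) auto
  also have "\<dots> = A * B * exp (\<beta> * \<Lambda>) * (h * (\<Sum>k<N. exp (- (c * h) * \<bar>real k - real k0\<bar>)))"
    by (simp add: sum_distrib_left mult_ac)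
  also have "\<dots> \<le> A * B * exp (\<beta> * \<Lambda>) * (2 * (1 + c) / c)"
  proof (intro mult_left_mono riemann_sum_exp_decay_le)
    have "1 * h \<le> lam * h" using lam grid(2) by (intro mult_right_mono) auto
    then show "h \<le> 1" using grid(3) by simp
  qed (use grid A lam \<alpha>_pos \<beta>_pos in \<open>auto simp: c_def B_def\<close>)
  finally show "euclid_length \<gamma> a b \<le> A * B * (2 * (1 + c) / c) * exp (\<beta> * \<Lambda>)"
    using length(2)[OF w] cells by (simp add: w_def \<tau>_def mult_ac)
qed

end

lemma quasi_geodesic_length_estimate:
  assumes lam: "1 \<le> lam"
  shows "\<exists>C>0. \<forall>x\<in>\<Omega>. \<forall>y\<in>\<Omega>. \<forall>\<gamma> a b.
           x \<noteq> y \<and> a \<le> b \<and> quasi_geodesic \<Omega> (finsler_dist \<Omega> F) lam \<gamma> {a..b} \<and>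
           \<gamma> a = x \<and> \<gamma> b = y \<longrightarrow>
           finsler_dist \<Omega> F x y \<ge>
             2 * \<alpha> * ln (euclid_length \<gamma> a b powr (1 / \<beta>) / sqrt (bdist \<Omega> x * bdist \<Omega> y)) - C"
proof -
  define H where "H = lam^2 * (2 * morse_radius lam \<delta> + 1) + morse_radius lam \<delta>"
  define c where "c = \<beta> / (lam * \<alpha>)"
  define K where "K = (3 * exp ((1 + C1) / \<alpha>) / 2) powr \<beta> * lam / C2
    * exp (\<beta> * (4 * H + 2 * \<delta> + 1 + 3 * C1 / 2) / \<alpha>) * (2 * (1 + c) / c)"
  have "0 < c" using lam \<alpha>_pos \<beta>_pos by (simp add: c_def)
  then have K: "0 < K" using lam C2_pos by (simp add: K_def add_pos_pos)
  show ?thesis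
  proof (intro exI[of _ "\<bar>2 * \<alpha> * ln K / \<beta>\<bar> + 1"] conjI ballI allI impI)
    fix x y \<gamma> a b
    assume xy: "x \<in> \<Omega>" "y \<in> \<Omega>"
      and "x \<noteq> y \<and> a \<le> b \<and> quasi_geodesic \<Omega> (finsler_dist \<Omega> F) lam \<gamma> {a..b} \<and> \<gamma> a = x \<and> \<gamma> b = y"
    then have qg: "quasi_geodesic \<Omega> (finsler_dist \<Omega> F) lam \<gamma> {a..b}" and ends: "\<gamma> a = x" "\<gamma> b = y"
      and "a < b" "x \<noteq> y"
      by (auto simp: order.order_iff_strict)
    have "\<forall>t\<in>{a..b}. gromov_prod (finsler_dist \<Omega> F) (\<gamma> a) (\<gamma> b) (\<gamma> t) \<le> H"
      using quasi_geodesic_gromov_prod_le[OF geodesic four_point \<delta>_nonneg qg lam] by (simp add: H_def)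
    note length = euclid_length_quasi_geodesic_le[OF qg lam \<open>a < b\<close> this]
    have "norm (y - x) \<le> euclid_length \<gamma> a b" using length(1) ends by simp
    moreover have "0 < norm (y - x)" using \<open>x \<noteq> y\<close> by simp
    ultimately have "0 < euclid_length \<gamma> a b" by linarith
    moreover have "euclid_length \<gamma> a b \<le> K * exp (\<beta> * ((ln (bdist \<Omega> x) + ln (bdist \<Omega> y)) / 2
        + finsler_dist \<Omega> F x y / (2 * \<alpha>)))"
      using length(2) ends by (simp add: K_def c_def mult_ac)
    ultimately have "2 * \<alpha> * ln (euclid_length \<gamma> a b powr (1 / \<beta>) / sqrt (bdist \<Omega> x * bdist \<Omega> y))
        \<le> finsler_dist \<Omega> F x y + 2 * \<alpha> * ln K / \<beta>"
      using K \<alpha>_pos \<beta>_pos xy bdist_pos by (intro ln_ratio_le_of_le_exp) auto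
    then show "finsler_dist \<Omega> F x y
        \<ge> 2 * \<alpha> * ln (euclid_length \<gamma> a b powr (1 / \<beta>) / sqrt (bdist \<Omega> x * bdist \<Omega> y))
          - (\<bar>2 * \<alpha> * ln K / \<beta>\<bar> + 1)"
      by linarith
  qed (intro add_nonneg_pos; simp)
qed

end

theorem theorem1p2:
  fixes \<Omega> :: "(complex^'n) set"
    and F :: "complex^'n \<Rightarrow> complex^'n \<Rightarrow> real"
    and C1 C2 \<alpha> \<beta> lam :: real
  assumes n2: "CARD('n) \<ge> 2"
    and dom: "open \<Omega>" "connected \<Omega>" "\<Omega> \<noteq> {}" "bounded \<Omega>"
    and fins: "finsler_metric \<Omega> F"
    and compl: "Metric_space.mcomplete \<Omega> (finsler_dist \<Omega> F)"
    and hyp: "gromov_hyperbolic \<Omega> (finsler_dist \<Omega> F)"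
    and cst: "C1 > 0" "C2 > 0" "\<alpha> > 0" "0 < \<beta>" "\<beta> < 1"
    and H1: "\<forall>x\<in>\<Omega>. \<forall>y\<in>\<Omega>.
               finsler_dist \<Omega> F x y \<ge> \<alpha> * \<bar>ln (bdist \<Omega> x / bdist \<Omega> y)\<bar> - C1"
    and H2: "\<forall>z\<in>\<Omega>. \<forall>X. X \<noteq> 0 \<longrightarrow> F z X \<ge> C2 * norm X / (bdist \<Omega> z) powr \<beta>"
    and lam: "lam \<ge> 1"
  shows "\<exists>C>0. \<forall>x\<in>\<Omega>. \<forall>y\<in>\<Omega>. \<forall>\<gamma> a b.
           x \<noteq> y \<and> a \<le> b \<and> quasi_geodesic \<Omega> (finsler_dist \<Omega> F) lam \<gamma> {a..b} \<and>
           \<gamma> a = x \<and> \<gamma> b = y \<longrightarrow>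
           finsler_dist \<Omega> F x y \<ge>
             2 * \<alpha> * ln (euclid_length \<gamma> a b powr (1 / \<beta>) / sqrt (bdist \<Omega> x * bdist \<Omega> y)) - C"
proof -
  obtain \<delta> where MS: "Metric_space \<Omega> (finsler_dist \<Omega> F)" and geo: "geodesic_space \<Omega> (finsler_dist \<Omega> F)"
    and \<delta>: "0 \<le> \<delta>" "gromov_four_point \<Omega> (finsler_dist \<Omega> F) \<delta>"
    using hyp unfolding gromov_hyperbolic_def gromov_four_point_def by blast
  interpret hyperbolic_finsler_domain \<Omega> F C2 \<beta> C1 \<alpha> \<delta>
    by (intro hyperbolic_finsler_domain.intro finsler_domain.intro finsler_domain_axioms.intro
        hyperbolic_finsler_domain_axioms.intro MS) (use dom fins H1 H2 cst \<delta> geo in auto)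
  show ?thesis by (rule quasi_geodesic_length_estimate[OF lam])
qed

end
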